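(* Let $1/n\ll\varepsilon\ll\varepsilon'\ll d'\ll\gamma\ll d,1/\Lambda,1/r,1/\Delta$. Suppose $(H,G,(X_i)_{i\in[r]},(V_i)_{i\in[r]})$ is an $(\varepsilon,d)$-super-regular blow-up instance. Assume further that (i) $\Delta(H)\le\Delta$ and $e_H(X_i,X_j)\ge\gamma^2n$ for all $ij\in\binom{[r]}{2}$; (ii) $|V_i|=(1\pm\varepsilon)n$ for all $i\in[r]$; (iii) $c\colon E(G)\to C$ is locally $\Lambda$-bounded and for all $\alpha\in C$, $$\sum_{ij\in\binom{[r]}{2}}e^\alpha_G(V_i,V_j)\,e_H(X_i,X_j)\le(1-\gamma)dn^2.$$ Then there exists a spanning subgraph $G'$ of $G$ such that (a) $(H,G',(X_i)_{i\in[r]},(V_i)_{i\in[r]})$ is an $(\varepsilon',d')$-super-regular blow-up instance; (b) $c$ restricted to $G'$ is colour-split with respect to $(V_i)_{i\in[r]}$; (c) $c$ restricted to $G'[V_i,V_j]$ is $(1-\frac{\gamma}{2})\frac{e_{G'}(V_i,V_j)}{e_H(X_i,X_j)}$-bounded for all $ij\in\binom{[r]}{2}$.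
   Context: Hierarchy convention: $a\ll b$ means there is an increasing function $f$ such that the statement holds whenever $a\le f(b)$; longer hierarchies are read right to left, each constant sufficiently small relative to those to its right. Write $a=b\pm c$ for $a\in[b-c,b+c]$. For disjoint vertex sets $S,T$, $e_G(S,T)$ is the number of edges between them, $d_G(S,T)=e_G(S,T)/(|S||T|)$, $e^\alpha_G(S,T)$ the number of such edges of colour $\alpha$, and $G[S,T]$ the bipartite subgraph of edges between $S$ and $T$. A bipartite graph with classes $(V_1,V_2)$ is $(\varepsilon,d)$-super-regular if $d_G(S,T)=d\pm\varepsilon$ for all $S\subseteq V_1,T\subseteq V_2$ with $|S|\ge\varepsilon|V_1|,|T|\ge\varepsilon|V_2|$, and $\deg_G(v)=(d\pm\varepsilon)|V_{3-i}|$ for all $v\in V_i$, $i\in[2]$. $(H,G,(X_i)_{i\in[r]},(V_i)_{i\in[r]})$ is an $(\varepsilon,d)$-super-regular blow-up instance if $(X_i)$ partitions $V(H)$ into independent sets, $(V_i)$ partitions $V(G)$, $|X_i|=|V_i|$, and every $G[V_i,V_j]$, $i\ne j$, is $(\varepsilon,d)$-super-regular. A colouring is $k$-bounded if every colour appears on at most $k$ edges, locally $\Lambda$-bounded if every colour class has maximum degree at most $\Lambda$. A colouring $c$ of $G$ is colour-split with respect to a partition $(V_i)_{i\in[r]}$ of $V(G)$ if $c(e)\neq c(f)$ whenever $e\in E(G[V_i,V_j])$ and $f\notin E(G[V_i,V_j])$ for some $i\ne j$. *)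

theory Defs
  imports Complex_Main "HOL-Library.Disjoint_Sets"
begin

definition simple_graph :: "'a set \<Rightarrow> 'a set set \<Rightarrow> bool" where
  "simple_graph V E \<longleftrightarrow> finite V \<and>
     (\<forall>e\<in>E. \<exists>u v. e = {u, v} \<and> u \<noteq> v \<and> u \<in> V \<and> v \<in> V)"

definition edges_between :: "'a set set \<Rightarrow> 'a set \<Rightarrow> 'a set \<Rightarrow> 'a set set" where
  "edges_between E S T = {e\<in>E. \<exists>u\<in>S. \<exists>v\<in>T. e = {u, v}}"

definition e_betw :: "'a set set \<Rightarrow> 'a set \<Rightarrow> 'a set \<Rightarrow> nat" where
  "e_betw E S T = card (edges_between E S T)"

definition dens :: "'a set set \<Rightarrow> 'a set \<Rightarrow> 'a set \<Rightarrow> real" where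
  "dens E S T = real (e_betw E S T) / (real (card S) * real (card T))"

definition e_col :: "('a set \<Rightarrow> 'c) \<Rightarrow> 'c \<Rightarrow> 'a set set \<Rightarrow> 'a set \<Rightarrow> 'a set \<Rightarrow> nat" where
  "e_col c \<alpha> E S T = card {e \<in> edges_between E S T. c e = \<alpha>}"

definition deg_into :: "'a set set \<Rightarrow> 'a \<Rightarrow> 'a set \<Rightarrow> nat" where
  "deg_into E v T = card {u\<in>T. {u, v} \<in> E}"

definition super_regular ::
  "'a set set \<Rightarrow> 'a set \<Rightarrow> 'a set \<Rightarrow> real \<Rightarrow> real \<Rightarrow> bool" where
  "super_regular E A B \<epsilon> d \<longleftrightarrow>
     (\<forall>S T. S \<subseteq> A \<longrightarrow> T \<subseteq> B \<longrightarrow> real (card S) \<ge> \<epsilon> * real (card A)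
        \<longrightarrow> real (card T) \<ge> \<epsilon> * real (card B)
        \<longrightarrow> \<bar>dens E S T - d\<bar> \<le> \<epsilon>) \<and>
     (\<forall>v\<in>A. \<bar>real (deg_into E v B) - d * real (card B)\<bar> \<le> \<epsilon> * real (card B)) \<and>
     (\<forall>v\<in>B. \<bar>real (deg_into E v A) - d * real (card A)\<bar> \<le> \<epsilon> * real (card A))"

definition independent :: "'a set set \<Rightarrow> 'a set \<Rightarrow> bool" where
  "independent E S \<longleftrightarrow> (\<forall>e\<in>E. \<not> e \<subseteq> S)"

definition blowup_instance ::
  "'a set \<Rightarrow> 'a set set \<Rightarrow> 'b set \<Rightarrow> 'b set set \<Rightarrow> nat \<Rightarrow> (nat \<Rightarrow> 'a set)
    \<Rightarrow> (nat \<Rightarrow> 'b set) \<Rightarrow> real \<Rightarrow> real \<Rightarrow> bool" where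
  "blowup_instance VH EH VG EG r X V \<epsilon> d \<longleftrightarrow>
     simple_graph VH EH \<and> simple_graph VG EG \<and>
     disjoint_family_on X {1..r} \<and> (\<Union>i\<in>{1..r}. X i) = VH \<and>
     (\<forall>i\<in>{1..r}. independent EH (X i)) \<and>
     disjoint_family_on V {1..r} \<and> (\<Union>i\<in>{1..r}. V i) = VG \<and>
     (\<forall>i\<in>{1..r}. card (X i) = card (V i)) \<and>
     (\<forall>i\<in>{1..r}. \<forall>j\<in>{1..r}. i \<noteq> j \<longrightarrow>
        super_regular (edges_between EG (V i) (V j)) (V i) (V j) \<epsilon> d)"

definition max_degree_le :: "'a set \<Rightarrow> 'a set set \<Rightarrow> nat \<Rightarrow> bool" where
  "max_degree_le V E \<Delta> \<longleftrightarrow> (\<forall>v\<in>V. card {e\<in>E. v \<in> e} \<le> \<Delta>)"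

definition k_bounded :: "('a set \<Rightarrow> 'c) \<Rightarrow> 'a set set \<Rightarrow> real \<Rightarrow> bool" where
  "k_bounded c E k \<longleftrightarrow> (\<forall>\<alpha>. real (card {e\<in>E. c e = \<alpha>}) \<le> k)"

definition locally_bounded :: "('a set \<Rightarrow> 'c) \<Rightarrow> 'a set set \<Rightarrow> nat \<Rightarrow> bool" where
  "locally_bounded c E \<Lambda> \<longleftrightarrow> (\<forall>\<alpha> v. card {e\<in>E. c e = \<alpha> \<and> v \<in> e} \<le> \<Lambda>)"

definition colour_split :: "('a set \<Rightarrow> 'c) \<Rightarrow> 'a set set \<Rightarrow> nat \<Rightarrow> (nat \<Rightarrow> 'a set) \<Rightarrow> bool" where
  "colour_split c E r V \<longleftrightarrow>
     (\<forall>i\<in>{1..r}. \<forall>j\<in>{1..r}. i \<noteq> j \<longrightarrow>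
        (\<forall>e\<in>edges_between E (V i) (V j). \<forall>f\<in>E - edges_between E (V i) (V j). c e \<noteq> c f))"

definition pairs :: "nat \<Rightarrow> (nat \<times> nat) set" where
  "pairs r = {(i, j). i \<in> {1..r} \<and> j \<in> {1..r} \<and> i < j}"

end

theory Submission
  imports Defs "HOL-Probability.Probability" "HOL-Real_Asymp.Real_Asymp"
begin

(* For every colour \<alpha> choose one pair class G[V_i,V_j] (i < j) at random, the class ij with
   probability q_\<alpha>(ij) = e^\<alpha>(V_i,V_j) e_H(X_i,X_j) / ((1 - 3\<gamma>/4) d n^2) + p, where p = d'/d
   (hypothesis (iii) says exactly that these weights sum to at most 1), and keep every
   \<alpha>-coloured edge of the chosen class independently with probability p / q_\<alpha>(ij). Every edge
   of G between two parts then survives with probability exactly p, the surviving edges of one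
   colour lie in a single class, so the colouring is colour-split, and different colours are
   independent.

   Degrees of the random graph G' concentrate by Hoeffding's inequality, since by local
   boundedness a colour contributes at most \<Lambda> edges at a vertex. Two common-neighbour
   indicators are dependent only when their edges share a colour, which happens for O(\<Lambda>)
   vertices, so the squared codegree deviations have small expectation and Markov's inequality
   applies. Small degree and codegree deviations give super-regularity (Cauchy-Schwarz twice).
   Finally, the number of \<alpha>-edges kept in class ij exceeds its mean
   (1 - 3\<gamma>/4) d' n^2 / e_H(X_i,X_j) by less than \<gamma> d' n^2 / (8 e_H(X_i,X_j)) (Hoeffding again),
   while e_G'(V_i,V_j) is about d' n^2. Each of the three bad events has probability at most 1/4. *)

definition adj :: "'a set set \<Rightarrow> 'a \<Rightarrow> 'a \<Rightarrow> real" where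
  "adj E u w = (if {u, w} \<in> E then 1 else 0)"

lemma adj_commute: "adj E u w = adj E w u"
  unfolding adj_def by (simp add: insert_commute)

lemma adj_nonneg: "0 \<le> adj E u w"
  and adj_le_one: "adj E u w \<le> 1"
  unfolding adj_def by auto

lemma adj_edges_between:
  assumes "u \<in> X" "w \<in> Y"
  shows "adj (edges_between E X Y) u w = adj E u w"
  using assms unfolding adj_def edges_between_def by auto

lemma real_card_filter_eq_sum:
  "finite A \<Longrightarrow> real (card {x\<in>A. P x}) = (\<Sum>x\<in>A. if P x then 1 else 0)"
  by (simp add: sum.If_cases Int_def conj_commute)

lemma edges_between_commute: "edges_between E S T = edges_between E T S"
  unfolding edges_between_def by (auto simp: insert_commute)

lemma edges_between_edges_between:
  assumes "S \<subseteq> X" "T \<subseteq> Y"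
  shows "edges_between (edges_between E X Y) S T = edges_between E S T"
  using assms unfolding edges_between_def by blast

lemma card_edges_between:
  assumes disj: "S \<inter> T = {}"
  shows "card (edges_between F S T) = card {p\<in>S\<times>T. {fst p, snd p} \<in> F}"
proof -
  have "bij_betw (\<lambda>p. {fst p, snd p}) {p\<in>S\<times>T. {fst p, snd p} \<in> F} (edges_between F S T)"
  proof (rule bij_betwI')
    fix x y assume x: "x \<in> {p\<in>S\<times>T. {fst p, snd p} \<in> F}" and y: "y \<in> {p\<in>S\<times>T. {fst p, snd p} \<in> F}"
    show "({fst x, snd x} = {fst y, snd y}) = (x = y)"
    proof
      assume eq: "{fst x, snd x} = {fst y, snd y}"
      have "fst x \<noteq> snd y" "snd x \<noteq> fst y" using x y disj by auto
      with eq have "fst x = fst y \<and> snd x = snd y" by (metis doubleton_eq_iff)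
      then show "x = y" by (simp add: prod_eq_iff)
    qed simp
  next
    fix x assume "x \<in> {p\<in>S\<times>T. {fst p, snd p} \<in> F}"
    then have "fst x \<in> S" "snd x \<in> T" "{fst x, snd x} \<in> F" by auto
    then show "{fst x, snd x} \<in> edges_between F S T" unfolding edges_between_def by fast
  next
    fix e assume "e \<in> edges_between F S T"
    then obtain u v where "u \<in> S" "v \<in> T" "e = {u, v}" "e \<in> F" unfolding edges_between_def by auto
    then show "\<exists>x\<in>{p\<in>S\<times>T. {fst p, snd p} \<in> F}. e = {fst x, snd x}"
      by (intro bexI[of _ "(u, v)"]) auto
  qed
  then show ?thesis by (rule bij_betw_same_card[symmetric])
qed

lemma e_betw_eq_sum_adj:
  assumes "S \<inter> T = {}" "finite S" "finite T"
  shows "real (e_betw F S T) = (\<Sum>u\<in>S. \<Sum>w\<in>T. adj F u w)"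
proof -
  have "real (e_betw F S T) = (\<Sum>p\<in>S\<times>T. if {fst p, snd p} \<in> F then 1 else 0)"
    unfolding e_betw_def card_edges_between[OF assms(1)]
    using assms by (intro real_card_filter_eq_sum) auto
  then show ?thesis by (simp add: sum.cartesian_product adj_def case_prod_beta)
qed

lemma e_betw_edges_between_eq_sum_adj:
  assumes "X \<inter> Y = {}" "finite X" "finite Y" "S \<subseteq> X" "T \<subseteq> Y"
  shows "real (e_betw (edges_between E X Y) S T) = (\<Sum>u\<in>S. \<Sum>w\<in>T. adj E u w)"
  using assms e_betw_eq_sum_adj[of S T E] finite_subset
  unfolding e_betw_def edges_between_edges_between[OF assms(4,5)] by blast

lemma deg_into_eq_sum_adj:
  assumes "finite T"
  shows "real (deg_into F v T) = (\<Sum>u\<in>T. adj F v u)"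
  using real_card_filter_eq_sum[OF assms, of "\<lambda>u. {u, v} \<in> F"]
  unfolding deg_into_def by (simp add: adj_def insert_commute)

lemma deg_into_edges_between_left:
  assumes "v \<in> X" "finite Y"
  shows "real (deg_into (edges_between E X Y) v Y) = (\<Sum>w\<in>Y. adj E v w)"
  using assms by (simp add: deg_into_eq_sum_adj adj_edges_between)

lemma deg_into_edges_between_right:
  assumes "v \<in> Y" "finite X"
  shows "real (deg_into (edges_between E X Y) v X) = (\<Sum>u\<in>X. adj E u v)"
  using assms by (simp add: deg_into_eq_sum_adj adj_edges_between adj_commute[of _ v])

section \<open>Super-regularity from degrees and codegrees\<close>

lemma sum_deviation_pow4_le_sum_cross_squares:
  fixes a :: "'u \<Rightarrow> 'w \<Rightarrow> real"
  assumes A: "finite A" and B: "finite B" and SA: "S \<subseteq> A" and TB: "T \<subseteq> B"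
  shows "(\<Sum>u\<in>S. \<Sum>w\<in>T. a u w - d)^4 \<le> (real (card A))^2 * (real (card B))^2 *
          (\<Sum>w\<in>B. \<Sum>w'\<in>B. (\<Sum>u\<in>A. (a u w - d) * (a u w' - d))^2)"
proof -
  define h where "h u = (\<Sum>w\<in>T. a u w - d)" for u
  define g where "g w w' = (\<Sum>u\<in>A. (a u w - d) * (a u w' - d))" for w w'
  define D where "D = (\<Sum>u\<in>S. h u)"
  have "D^2 \<le> real (card S) * (\<Sum>u\<in>S. (h u)^2)"
    unfolding D_def using sum_squared_le_sum_of_squares[of h S] by (simp add: mult.commute)
  also have "\<dots> \<le> real (card A) * (\<Sum>u\<in>A. (h u)^2)"
    using card_mono[OF A SA] by (intro mult_mono sum_mono2[OF A SA]) (auto intro: sum_nonneg)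
  also have hg: "(\<Sum>u\<in>A. (h u)^2) = (\<Sum>w\<in>T. \<Sum>w'\<in>T. g w w')"
  proof -
    have "(\<Sum>u\<in>A. (h u)^2)
        = (\<Sum>u\<in>A. \<Sum>w\<in>T. \<Sum>w'\<in>T. (a u w - d) * (a u w' - d))"
      unfolding h_def power2_eq_square by (simp add: sum_product)
    also have "\<dots> = (\<Sum>w\<in>T. \<Sum>w'\<in>T. \<Sum>u\<in>A. (a u w - d) * (a u w' - d))"
      by (subst sum.swap) (intro sum.cong refl sum.swap)
    finally show ?thesis unfolding g_def .
  qed
  finally have D2: "D^2 \<le> real (card A) * (\<Sum>w\<in>T. \<Sum>w'\<in>T. g w w')" .
  have G_nonneg: "0 \<le> (\<Sum>w\<in>T. \<Sum>w'\<in>T. g w w')"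
    unfolding hg[symmetric] by (intro sum_nonneg) auto
  have "(\<Sum>w\<in>T. \<Sum>w'\<in>T. g w w')^2 = (\<Sum>p\<in>T\<times>T. g (fst p) (snd p))^2"
    by (simp add: sum.cartesian_product case_prod_beta)
  also have "\<dots>
      \<le> real (card (T\<times>T)) * (\<Sum>p\<in>T\<times>T. (g (fst p) (snd p))^2)"
    using sum_squared_le_sum_of_squares[of "\<lambda>p. g (fst p) (snd p)" "T\<times>T"]
    by (simp add: mult.commute)
  also have "\<dots>
      \<le> real (card (B\<times>B)) * (\<Sum>p\<in>B\<times>B. (g (fst p) (snd p))^2)"
  proof (rule mult_mono)
    show "real (card (T\<times>T)) \<le> real (card (B\<times>B))"
      using card_mono[of "B\<times>B" "T\<times>T"] B TB by (auto simp flip: of_nat_mult)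
    show "(\<Sum>p\<in>T\<times>T. (g (fst p) (snd p))^2)
        \<le> (\<Sum>p\<in>B\<times>B. (g (fst p) (snd p))^2)"
      by (rule sum_mono2) (use B TB in auto)
  qed (auto intro: sum_nonneg)
  also have "\<dots> = (real (card B))^2 * (\<Sum>w\<in>B. \<Sum>w'\<in>B. (g w w')^2)"
    by (simp add: sum.cartesian_product case_prod_beta card_cartesian_product power2_eq_square)
  finally have G2: "(\<Sum>w\<in>T. \<Sum>w'\<in>T. g w w')^2
      \<le> (real (card B))^2 * (\<Sum>w\<in>B. \<Sum>w'\<in>B. (g w w')^2)" .
  have "D^4 = (D^2)^2" by simp
  also have "\<dots> \<le> (real (card A))^2 * (\<Sum>w\<in>T. \<Sum>w'\<in>T. g w w')^2"
    using power_mono[OF D2, of 2] by (simp add: power_mult_distrib)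
  also have "\<dots>
      \<le> (real (card A))^2 * ((real (card B))^2 * (\<Sum>w\<in>B. \<Sum>w'\<in>B. (g w w')^2))"
    using G2 by (intro mult_left_mono) auto
  finally show ?thesis unfolding D_def h_def g_def by simp
qed

lemma square_diff_diff_le: "((x::real) - y - z)^2 \<le> 3 * x^2 + 3 * y^2 + 3 * z^2"
proof -
  have "3*x^2 + 3*y^2 + 3*z^2 - (x - y - z)^2 = (x + y)^2 + (x + z)^2 + (y - z)^2"
    by (simp add: power2_eq_square algebra_simps)
  moreover have "0 \<le> (x + y)^2 + (x + z)^2 + (y - z)^2" by simp
  ultimately show ?thesis by linarith
qed

lemma sum_deviation_pow4_le_of_degrees_codegrees:
  fixes a :: "'u \<Rightarrow> 'w \<Rightarrow> real"
  assumes A: "finite A" and B: "finite B" and SA: "S \<subseteq> A" and TB: "T \<subseteq> B"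
    and d: "0 \<le> d" "d \<le> 1"
    and degs: "\<forall>w\<in>B. \<bar>(\<Sum>u\<in>A. a u w) - d * real (card A)\<bar>
        \<le> \<theta> * real (card A)"
    and codegs: "(\<Sum>w\<in>B. \<Sum>w'\<in>B. ((\<Sum>u\<in>A. a u w * a u w') - d^2 * real (card A))^2)
              \<le> \<delta> * (real (card A))^2 * (real (card B))^2"
  shows "(\<Sum>u\<in>S. \<Sum>w\<in>T. a u w - d)^4
      \<le> (3 * \<delta> + 6 * \<theta>^2) * (real (card A))^4 * (real (card B))^4"
proof -
  define nA where "nA = real (card A)"
  define nB where "nB = real (card B)"
  define X where "X w w' = (\<Sum>u\<in>A. a u w * a u w') - d^2 * nA" for w w'
  define Y where "Y w = (\<Sum>u\<in>A. a u w) - d * nA" for w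
  have cross_eq: "(\<Sum>u\<in>A. (a u w - d) * (a u w' - d)) = X w w' - d * Y w' - d * Y w"
    for w w'
    unfolding X_def Y_def nA_def
    by (simp add: algebra_simps sum.distrib sum_subtractf sum_distrib_left power2_eq_square)
  have Y_bound: "(d * Y w)^2 \<le> \<theta>^2 * nA^2" if "w \<in> B" for w
  proof -
    have "\<bar>d * Y w\<bar> \<le> 1 * \<bar>Y w\<bar>" using d
      by (simp add: abs_mult mult_left_le_one_le)
    also have "\<dots> \<le> \<theta> * nA" using degs that unfolding Y_def nA_def by auto
    finally show ?thesis using power_mono[of "\<bar>d * Y w\<bar>" "\<theta> * nA" 2]
      by (simp add: power_mult_distrib)
  qed
  have "(\<Sum>w\<in>B. \<Sum>w'\<in>B. (\<Sum>u\<in>A. (a u w - d) * (a u w' - d))^2)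
      \<le> (\<Sum>w\<in>B. \<Sum>w'\<in>B. 3 * (X w w')^2 + 6 * \<theta>^2 * nA^2)"
  proof (intro sum_mono)
    fix w w' assume "w \<in> B" "w' \<in> B"
    then show "(\<Sum>u\<in>A. (a u w - d) * (a u w' - d))^2 \<le> 3 * (X w w')^2
        + 6 * \<theta>^2 * nA^2"
      using square_diff_diff_le[of "X w w'" "d * Y w'" "d * Y w"] Y_bound[of w] Y_bound[of w']
      unfolding cross_eq by linarith
  qed
  also have "\<dots> = 3 * (\<Sum>w\<in>B. \<Sum>w'\<in>B. (X w w')^2)
      + 6 * \<theta>^2 * nA^2 * nB^2"
    by (simp add: sum.distrib sum_distrib_left nB_def power2_eq_square algebra_simps)
  also have "\<dots> \<le> (3 * \<delta> + 6 * \<theta>^2) * nA^2 * nB^2"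
    using codegs unfolding X_def nA_def nB_def by (simp add: algebra_simps)
  finally have cross:
    "(\<Sum>w\<in>B. \<Sum>w'\<in>B. (\<Sum>u\<in>A. (a u w - d) * (a u w' - d))^2)
      \<le> (3 * \<delta> + 6 * \<theta>^2) * nA^2 * nB^2" .
  have "(\<Sum>u\<in>S. \<Sum>w\<in>T. a u w - d)^4 \<le> nA^2 * nB^2 *
          (\<Sum>w\<in>B. \<Sum>w'\<in>B. (\<Sum>u\<in>A. (a u w - d) * (a u w' - d))^2)"
    unfolding nA_def nB_def by (rule sum_deviation_pow4_le_sum_cross_squares[OF A B SA TB])
  also have "\<dots> \<le> nA^2 * nB^2 * ((3 * \<delta> + 6 * \<theta>^2) * nA^2 * nB^2)"
    using cross by (intro mult_left_mono) (auto simp: nA_def nB_def)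
  finally show ?thesis by (simp add: nA_def nB_def algebra_simps power_def)
qed

lemma abs_le_of_pow4_le:
  fixes D M :: real
  assumes "D^4 \<le> M^4" "0 \<le> M"
  shows "\<bar>D\<bar> \<le> M"
  using assms power_le_imp_le_base[of "\<bar>D\<bar>" 3 M] by (simp add: power_even_abs)

lemma sum_adj_deviation_le_of_degrees_codegrees:
  assumes fX: "finite X" and fY: "finite Y" and SX: "S \<subseteq> X" and TY: "T \<subseteq> Y"
    and d: "0 \<le> d" "d \<le> 1" and e: "0 < \<epsilon>"
    and small: "3 * \<delta> + 6 * \<theta>^2 \<le> \<epsilon>^12"
    and cS: "\<epsilon> * real (card X) \<le> real (card S)"
      and cT: "\<epsilon> * real (card Y) \<le> real (card T)"
    and degY: "\<forall>w\<in>Y. \<bar>(\<Sum>u\<in>X. adj E u w) - d * real (card X)\<bar>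
        \<le> \<theta> * real (card X)"
    and codegs: "(\<Sum>w\<in>Y. \<Sum>w'\<in>Y. ((\<Sum>u\<in>X. adj E u w * adj E u w') - d^2 * real (card X))^2)
              \<le> \<delta> * (real (card X))^2 * (real (card Y))^2"
  shows "\<bar>(\<Sum>u\<in>S. \<Sum>w\<in>T. adj E u w) - d * real (card S) * real (card T)\<bar>
           \<le> \<epsilon> * real (card S) * real (card T)"
proof -
  define nX where "nX = real (card X)"
  define nY where "nY = real (card Y)"
  define D where "D = (\<Sum>u\<in>S. \<Sum>w\<in>T. adj E u w - d)"
  have "D^4 \<le> (3 * \<delta> + 6 * \<theta>^2) * nX^4 * nY^4"
    unfolding D_def nX_def nY_def
    by (rule sum_deviation_pow4_le_of_degrees_codegrees[OF fX fY SX TY d degY codegs])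
  also have "\<dots> \<le> \<epsilon>^12 * nX^4 * nY^4"
    using small by (intro mult_right_mono) (auto simp: nX_def nY_def)
  also have "\<dots> = (\<epsilon> * (\<epsilon> * nX) * (\<epsilon> * nY))^4"
    by (simp add: power_mult_distrib flip: power_mult)
  also have "\<dots> \<le> (\<epsilon> * real (card S) * real (card T))^4"
    using cS cT e unfolding nX_def nY_def by (intro power_mono mult_mono) auto
  finally have "\<bar>D\<bar> \<le> \<epsilon> * real (card S) * real (card T)"
    by (rule abs_le_of_pow4_le) (use e in auto)
  then show ?thesis unfolding D_def by (simp add: sum_subtractf mult_ac)
qed

lemma super_regular_of_degrees_codegrees:
  assumes fX: "finite X" and fY: "finite Y" and disj: "X \<inter> Y = {}"
    and ne: "X \<noteq> {}" "Y \<noteq> {}"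
    and d: "0 \<le> d" "d \<le> 1" and e: "0 < \<epsilon>" and \<theta>: "\<theta> \<le> \<epsilon>"
    and small: "3 * \<delta> + 6 * \<theta>^2 \<le> \<epsilon>^12"
    and degX: "\<forall>v\<in>X. \<bar>(\<Sum>w\<in>Y. adj E v w) - d * real (card Y)\<bar>
        \<le> \<theta> * real (card Y)"
    and degY: "\<forall>w\<in>Y. \<bar>(\<Sum>u\<in>X. adj E u w) - d * real (card X)\<bar>
        \<le> \<theta> * real (card X)"
    and codegs: "(\<Sum>w\<in>Y. \<Sum>w'\<in>Y. ((\<Sum>u\<in>X. adj E u w * adj E u w') - d^2 * real (card X))^2)
              \<le> \<delta> * (real (card X))^2 * (real (card Y))^2"
  shows "super_regular (edges_between E X Y) X Y \<epsilon> d"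
  unfolding super_regular_def
proof (intro conjI allI impI ballI)
  fix S T assume SX: "S \<subseteq> X" and TY: "T \<subseteq> Y"
    and cS: "\<epsilon> * real (card X) \<le> real (card S)"
      and cT: "\<epsilon> * real (card Y) \<le> real (card T)"
  have "\<bar>real (e_betw (edges_between E X Y) S T) - d * (real (card S) * real (card T))\<bar>
      \<le> \<epsilon> * (real (card S) * real (card T))"
    using sum_adj_deviation_le_of_degrees_codegrees[OF fX fY SX TY d e small cS cT degY codegs]
    by (simp add: e_betw_edges_between_eq_sum_adj[OF disj fX fY SX TY] mult.assoc)
  moreover have "0 < \<epsilon> * real (card X)" "0 < \<epsilon> * real (card Y)"
    using e fX fY ne by (simp_all add: card_gt_0_iff)
  then have "0 < real (card S)" "0 < real (card T)" using cS cT by linarith+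
  ultimately show "\<bar>dens (edges_between E X Y) S T - d\<bar> \<le> \<epsilon>"
    unfolding dens_def by (simp add: abs_le_iff field_simps)
next
  fix v assume "v \<in> X"
  then show "\<bar>real (deg_into (edges_between E X Y) v Y) - d * real (card Y)\<bar>
      \<le> \<epsilon> * real (card Y)"
    using degX mult_right_mono[OF \<theta>, of "real (card Y)"] deg_into_edges_between_left[OF _ fY]
    by force
next
  fix v assume "v \<in> Y"
  then show "\<bar>real (deg_into (edges_between E X Y) v X) - d * real (card X)\<bar>
      \<le> \<epsilon> * real (card X)"
    using degY mult_right_mono[OF \<theta>, of "real (card X)"] deg_into_edges_between_right[OF _ fX]
    by force
qed

section \<open>Codegrees in super-regular pairs\<close>

lemma super_regular_sum_adj:
  assumes sr: "super_regular (edges_between E X Y) X Y \<epsilon> d"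
    and fX: "finite X" and fY: "finite Y" and disj: "X \<inter> Y = {}"
    and SX: "S \<subseteq> X" and TY: "T \<subseteq> Y"
    and cS: "\<epsilon> * real (card X) \<le> real (card S)"
      and cT: "\<epsilon> * real (card Y) \<le> real (card T)"
    and ne: "S \<noteq> {}" "T \<noteq> {}"
  shows "\<bar>(\<Sum>u\<in>S. \<Sum>w\<in>T. adj E u w) - d * real (card S) * real (card T)\<bar>
           \<le> \<epsilon> * real (card S) * real (card T)"
proof -
  have "0 < real (card S)" "0 < real (card T)"
    using SX TY fX fY ne by (auto simp: card_gt_0_iff intro: finite_subset)
  moreover have "\<bar>dens (edges_between E X Y) S T - d\<bar> \<le> \<epsilon>"
    using sr SX TY cS cT unfolding super_regular_def by blast
  ultimately show ?thesis
    unfolding dens_def e_betw_edges_between_eq_sum_adj[OF disj fX fY SX TY]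
    by (simp add: abs_le_iff field_simps)
qed

lemma super_regular_deg_left:
  assumes "super_regular (edges_between E X Y) X Y \<epsilon> d" "finite Y" "v \<in> X"
  shows "\<bar>(\<Sum>w\<in>Y. adj E v w) - d * real (card Y)\<bar>
      \<le> \<epsilon> * real (card Y)"
  using assms deg_into_edges_between_left[OF assms(3,2), of E] unfolding super_regular_def by auto

lemma super_regular_deg_right:
  assumes "super_regular (edges_between E X Y) X Y \<epsilon> d" "finite X" "w \<in> Y"
  shows "\<bar>(\<Sum>u\<in>X. adj E u w) - d * real (card X)\<bar>
      \<le> \<epsilon> * real (card X)"
  using assms deg_into_edges_between_right[OF assms(3,2), of E] unfolding super_regular_def by auto

lemma super_regular_few_deviating:
  fixes s :: real
  assumes sr: "super_regular (edges_between E X Y) X Y \<epsilon> d"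
    and fX: "finite X" and fY: "finite Y" and disj: "X \<inter> Y = {}" and e: "0 \<le> \<epsilon>"
    and NX: "N \<subseteq> X" and cN: "\<epsilon> * real (card X) \<le> real (card N)"
    and TY: "T \<subseteq> Y" and s: "\<bar>s\<bar> = 1"
    and dev: "\<forall>w\<in>T. \<epsilon> * real (card N)
        < s * ((\<Sum>u\<in>N. adj E u w) - d * real (card N))"
  shows "real (card T) \<le> \<epsilon> * real (card Y)"
proof (rule ccontr)
  assume "\<not> ?thesis"
  then have cT: "\<epsilon> * real (card Y) \<le> real (card T)" and Tne: "T \<noteq> {}"
    using e by auto
  have fT: "finite T" using TY fY finite_subset by blast
  have Nne: "N \<noteq> {}" using Tne dev by fastforce
  have "\<bar>(\<Sum>u\<in>N. \<Sum>w\<in>T. adj E u w) - d * real (card N) * real (card T)\<bar>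
      \<le> \<epsilon> * real (card N) * real (card T)"
    by (rule super_regular_sum_adj[OF sr fX fY disj NX TY cN cT Nne Tne])
  moreover have "(\<Sum>w\<in>T. \<epsilon> * real (card N))
      < (\<Sum>w\<in>T. s * ((\<Sum>u\<in>N. adj E u w) - d * real (card N)))"
    using dev by (intro sum_strict_mono[OF fT Tne]) auto
  then have "\<epsilon> * real (card N) * real (card T)
      < s * ((\<Sum>u\<in>N. \<Sum>w\<in>T. adj E u w) - d * real (card N) * real (card T))"
    by (simp add: sum_distrib_left sum_subtractf algebra_simps sum.swap[of _ T N])
  moreover have "s * ((\<Sum>u\<in>N. \<Sum>w\<in>T. adj E u w) - d * real (card N) * real (card T))
      \<le> \<bar>(\<Sum>u\<in>N. \<Sum>w\<in>T. adj E u w) - d * real (card N) * real (card T)\<bar>"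
    using s abs_ge_self[of "s * _"] by (simp add: abs_mult)
  ultimately show False by linarith
qed

lemma super_regular_few_outliers:
  assumes sr: "super_regular (edges_between E X Y) X Y \<epsilon> d"
    and fX: "finite X" and fY: "finite Y" and disj: "X \<inter> Y = {}" and e: "0 \<le> \<epsilon>"
    and NX: "N \<subseteq> X" and cN: "\<epsilon> * real (card X) \<le> real (card N)"
  shows "real (card {w\<in>Y. \<epsilon> * real (card N) < \<bar>(\<Sum>u\<in>N. adj E u w) - d * real (card N)\<bar>})
           \<le> 2 * \<epsilon> * real (card Y)"
proof -
  define T where
    "T s = {w\<in>Y. \<epsilon> * real (card N) < s * ((\<Sum>u\<in>N. adj E u w) - d * real (card N))}" for s :: real
  have T_small: "real (card (T s)) \<le> \<epsilon> * real (card Y)" if "\<bar>s\<bar> = 1" for s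
  proof (rule super_regular_few_deviating[OF sr fX fY disj e NX cN _ that])
    show "T s \<subseteq> Y" unfolding T_def by blast
  qed (simp add: T_def)
  have fin: "finite (T 1 \<union> T (-1))" using fY unfolding T_def by simp
  have "{w\<in>Y. \<epsilon> * real (card N) < \<bar>(\<Sum>u\<in>N. adj E u w) - d * real (card N)\<bar>} \<subseteq> T 1 \<union> T (-1)"
    unfolding T_def by (auto simp: abs_if)
  then have "card {w\<in>Y. \<epsilon> * real (card N) < \<bar>(\<Sum>u\<in>N. adj E u w) - d * real (card N)\<bar>} \<le> card (T 1 \<union> T (-1))"
    by (rule card_mono[OF fin])
  also have "\<dots> \<le> card (T 1) + card (T (-1))" by (rule card_Un_le)
  finally have "real (card {w\<in>Y. \<epsilon> * real (card N) < \<bar>(\<Sum>u\<in>N. adj E u w) - d * real (card N)\<bar>})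
      \<le> real (card (T 1)) + real (card (T (-1)))" by linarith
  moreover have "real (card (T 1)) \<le> \<epsilon> * real (card Y)" "real (card (T (-1)))
      \<le> \<epsilon> * real (card Y)"
    by (simp_all add: T_small)
  ultimately show ?thesis by linarith
qed

lemma sum_le_with_outliers:
  fixes f :: "'a \<Rightarrow> real"
  assumes "finite Y" "B \<subseteq> Y" "\<And>y. y \<in> Y - B \<Longrightarrow> f y \<le> a"
    "\<And>y. y \<in> B \<Longrightarrow> f y \<le> a + b" "0 \<le> a"
  shows "(\<Sum>y\<in>Y. f y) \<le> real (card Y) * a + real (card B) * b"
proof -
  have "(\<Sum>y\<in>Y. f y) \<le> (\<Sum>y\<in>Y. a + (if y \<in> B then b else 0))"
    using assms(3,4) by (intro sum_mono) auto
  also have "\<dots> = real (card Y) * a + real (card B) * b"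
    using assms(1,2) by (simp add: sum.distrib sum.If_cases Int_absorb1)
  finally show ?thesis .
qed

lemma codegree_estimate_arith:
  fixes cod N X d \<epsilon> :: real
  assumes "\<bar>cod - d * N\<bar> \<le> \<epsilon> * N" "\<bar>N - d * X\<bar>
      \<le> \<epsilon> * X" "N \<le> X" "0 \<le> d" "d \<le> 1" "0 \<le> \<epsilon>"
  shows "\<bar>cod - d^2 * X\<bar> \<le> 2 * \<epsilon> * X"
proof -
  have "d * N - d^2 * X = d * (N - d * X)"
    by (simp add: power2_eq_square right_diff_distrib mult.assoc)
  then have "\<bar>d * N - d^2 * X\<bar> = d * \<bar>N - d * X\<bar>" using assms(4)
    by (simp add: abs_mult)
  also have "\<dots> \<le> 1 * (\<epsilon> * X)" using assms by (intro mult_mono) auto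
  finally have "\<bar>d * N - d^2 * X\<bar> \<le> \<epsilon> * X" by simp
  moreover have "\<epsilon> * N \<le> \<epsilon> * X" using assms by (intro mult_left_mono) auto
  ultimately show ?thesis using assms(1) by linarith
qed

lemma super_regular_codegree_row:
  assumes sr: "super_regular (edges_between E X Y) X Y \<epsilon> d"
    and fX: "finite X" and fY: "finite Y" and disj: "X \<inter> Y = {}"
    and e: "0 < \<epsilon>" and d: "2 * \<epsilon> \<le> d" "d \<le> 1" and w: "w \<in> Y"
  shows "(\<Sum>w'\<in>Y. ((\<Sum>u\<in>X. adj E u w * adj E u w') - d^2 * real (card X))^2)
           \<le> 4 * \<epsilon> * (real (card X))^2 * real (card Y)"
proof -
  define nX where "nX = real (card X)"
  define N where "N = {u\<in>X. adj E u w = 1}"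
  define cod where "cod w' = (\<Sum>u\<in>N. adj E u w')" for w'
  define Bad where "Bad = {w'\<in>Y. \<epsilon> * real (card N) < \<bar>cod w' - d * real (card N)\<bar>}"
  have NX: "N \<subseteq> X" unfolding N_def by auto
  have cNX: "real (card N) \<le> nX" using card_mono[OF fX NX] by (simp add: nX_def)
  have adj_w: "adj E u w = (if u \<in> N then 1 else 0)" if "u \<in> X" for u
    using that unfolding N_def adj_def by auto
  have cod_eq: "(\<Sum>u\<in>X. adj E u w * adj E u w') = cod w'" for w'
  proof -
    have "(\<Sum>u\<in>X. adj E u w * adj E u w')
        = (\<Sum>u\<in>X. if u \<in> N then adj E u w' else 0)"
      by (intro sum.cong) (auto simp: adj_w)
    then show ?thesis unfolding cod_def using fX NX by (simp add: sum.If_cases Int_absorb1)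
  qed
  have "(\<Sum>u\<in>X. adj E u w) = real (card N)"
    using fX NX by (simp add: adj_w sum.If_cases Int_absorb1 cong: sum.cong)
  then have dN: "\<bar>real (card N) - d * nX\<bar> \<le> \<epsilon> * nX"
    using super_regular_deg_right[OF sr fX w] by (simp add: nX_def)
  have cN: "\<epsilon> * nX \<le> real (card N)"
    using dN mult_right_mono[OF d(1), of nX] by (simp add: nX_def abs_le_iff)
  have Bad_card: "real (card Bad) \<le> 2 * \<epsilon> * real (card Y)"
    unfolding Bad_def cod_def using super_regular_few_outliers[OF sr fX fY disj _ NX] e cN
    by (simp add: nX_def)
  have good: "(cod w' - d^2 * nX)^2 \<le> 4 * \<epsilon>^2 * nX^2" if "w' \<in> Y - Bad" for w'
  proof -
    have "\<bar>cod w' - d * real (card N)\<bar> \<le> \<epsilon> * real (card N)" using that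
      by (auto simp: Bad_def)
    then have "\<bar>cod w' - d^2 * nX\<bar> \<le> 2 * \<epsilon> * nX"
      using dN cNX d e by (intro codegree_estimate_arith) auto
    then have "\<bar>cod w' - d^2 * nX\<bar>^2 \<le> (2 * \<epsilon> * nX)^2"
      by (intro power_mono) auto
    then show ?thesis by (simp add: power_mult_distrib)
  qed
  have outlier: "(cod w' - d^2 * nX)^2 \<le> 4 * \<epsilon>^2 * nX^2 + nX^2" for w'
  proof -
    have "0 \<le> cod w'" "cod w' \<le> real (card N)"
      unfolding cod_def using sum_mono[of N "\<lambda>u. adj E u w'" "\<lambda>_. 1"]
      by (auto intro: sum_nonneg adj_nonneg adj_le_one)
    moreover have "0 \<le> d^2 * nX" "d^2 * nX \<le> nX"
      using d e mult_right_mono[of "d^2" 1 nX] by (auto simp: power_le_one nX_def)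
    ultimately have "\<bar>cod w' - d^2 * nX\<bar> \<le> nX" using cNX unfolding abs_le_iff
      by linarith
    then have "(cod w' - d^2 * nX)^2 \<le> nX^2"
      using power_mono[of "\<bar>cod w' - d^2 * nX\<bar>" nX 2] by simp
    moreover have "0 \<le> 4 * \<epsilon>^2 * nX^2" by simp
    ultimately show ?thesis by linarith
  qed
  have "(\<Sum>w'\<in>Y. (cod w' - d^2 * nX)^2) \<le> real (card Y) * (4 * \<epsilon>^2 * nX^2)
      + real (card Bad) * nX^2"
    using fY good outlier by (intro sum_le_with_outliers) (auto simp: Bad_def)
  also have "\<dots> \<le> real (card Y) * (4 * \<epsilon>^2 * nX^2)
      + 2 * \<epsilon> * real (card Y) * nX^2"
    using Bad_card by (intro add_left_mono mult_right_mono) auto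
  also have "\<dots> \<le> 4 * \<epsilon> * nX^2 * real (card Y)"
  proof -
    have "4 * \<epsilon>^2 \<le> 2 * \<epsilon>" using e d by (simp add: power2_eq_square)
    then have "real (card Y) * nX^2 * (4 * \<epsilon>^2)
        \<le> real (card Y) * nX^2 * (2 * \<epsilon>)"
      by (intro mult_left_mono) auto
    then show ?thesis by (simp add: algebra_simps)
  qed
  finally show ?thesis by (simp add: cod_eq nX_def)
qed

lemma super_regular_codegree_deviation:
  assumes "super_regular (edges_between E X Y) X Y \<epsilon> d"
    and "finite X" "finite Y" "X \<inter> Y = {}" "0 < \<epsilon>" "2 * \<epsilon> \<le> d" "d \<le> 1"
  shows "(\<Sum>w\<in>Y. \<Sum>w'\<in>Y. ((\<Sum>u\<in>X. adj E u w * adj E u w') - d^2 * real (card X))^2)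
           \<le> 4 * \<epsilon> * (real (card X))^2 * (real (card Y))^2"
proof -
  have "(\<Sum>w\<in>Y. \<Sum>w'\<in>Y. ((\<Sum>u\<in>X. adj E u w * adj E u w') - d^2 * real (card X))^2)
      \<le> (\<Sum>w\<in>Y. 4 * \<epsilon> * (real (card X))^2 * real (card Y))"
    by (intro sum_mono super_regular_codegree_row[OF assms])
  then show ?thesis by (simp add: power2_eq_square mult_ac)
qed

section \<open>Probabilistic tools\<close>

lemma exists_pmf_extending_weights:
  fixes q :: "'x \<Rightarrow> real"
  assumes fP: "finite P" and z: "z \<notin> P" and q0: "\<forall>x\<in>P. 0 \<le> q x"
    and qs: "(\<Sum>x\<in>P. q x) \<le> 1"
  shows "\<exists>\<pi>. (\<forall>x\<in>P. pmf \<pi> x = q x) \<and> set_pmf \<pi> \<subseteq> insert z P"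
proof -
  define f where "f x = (if x \<in> P then q x else if x = z then 1 - (\<Sum>y\<in>P. q y) else 0)"
    for x
  have nn: "\<And>x. 0 \<le> f x" unfolding f_def using q0 qs by auto
  have "(\<integral>\<^sup>+x. ennreal (f x) \<partial>count_space UNIV)
      = (\<Sum>x\<in>insert z P. ennreal (f x))"
    by (rule nn_integral_count_space') (use fP in \<open>auto simp: f_def\<close>)
  also have "\<dots> = ennreal (\<Sum>x\<in>insert z P. f x)" using nn by (simp add: sum_ennreal)
  also have "(\<Sum>x\<in>insert z P. f x) = 1"
  proof -
    have "(\<Sum>x\<in>insert z P. f x) = f z + (\<Sum>x\<in>P. f x)" using fP z by simp
    also have "(\<Sum>x\<in>P. f x) = (\<Sum>x\<in>P. q x)" by (intro sum.cong) (auto simp: f_def)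
    finally show ?thesis using z by (simp add: f_def)
  qed
  finally have int1: "(\<integral>\<^sup>+x. ennreal (f x) \<partial>count_space UNIV) = 1" by simp
  define \<pi> where "\<pi> = embed_pmf f"
  have pmf\<pi>: "pmf \<pi> x = f x" for x unfolding \<pi>_def by (rule pmf_embed_pmf[OF nn int1])
  have "set_pmf \<pi> \<subseteq> insert z P"
  proof
    fix x assume "x \<in> set_pmf \<pi>"
    then have "pmf \<pi> x \<noteq> 0" by (simp add: set_pmf_eq)
    then show "x \<in> insert z P" unfolding pmf\<pi> f_def by (auto split: if_splits)
  qed
  moreover have "\<forall>x\<in>P. pmf \<pi> x = q x" using pmf\<pi> by (simp add: f_def)
  ultimately show ?thesis by blast
qed

definition coin_flips ::
  "'e set \<Rightarrow> ('e \<Rightarrow> real) \<Rightarrow> ('e \<Rightarrow> bool) pmf" where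
  "coin_flips M pr = Pi_pmf M False (\<lambda>e. bernoulli_pmf (pr e))"

definition class_thinning ::
  "'e set \<Rightarrow> ('e \<Rightarrow> 'x) \<Rightarrow> 'x pmf \<Rightarrow> real \<Rightarrow> 'e set pmf" where
  "class_thinning M cls \<sigma> p = map_pmf (\<lambda>(s, b). {e\<in>M. cls e = s \<and> b e})
      (pair_pmf \<sigma> (coin_flips M (\<lambda>e. p / pmf \<sigma> (cls e))))"

lemma prob_coin_flips:
  assumes "finite M" "e \<in> M" "0 \<le> pr e" "pr e \<le> 1"
  shows "measure_pmf.prob (coin_flips M pr) {b. b e} = pr e"
proof -
  have "measure_pmf.prob (coin_flips M pr) {b. b e}
      = measure_pmf.prob (map_pmf (\<lambda>b. b e) (coin_flips M pr)) {True}"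
    by (simp add: vimage_def)
  also have "map_pmf (\<lambda>b. b e) (coin_flips M pr) = bernoulli_pmf (pr e)"
    unfolding coin_flips_def using assms by (simp add: Pi_pmf_component)
  finally show ?thesis using assms by (simp add: measure_pmf_single)
qed

lemma class_thinning_support:
  assumes "S \<in> set_pmf (class_thinning M cls \<sigma> p)"
  shows "S \<subseteq> M" "\<And>e f. e \<in> S \<Longrightarrow> f \<in> S \<Longrightarrow> cls e = cls f"
  using assms unfolding class_thinning_def by auto

lemma prob_class_thinning_mem:
  assumes fM: "finite M" and e: "e \<in> M" and p: "0 \<le> p" and pq: "p \<le> pmf \<sigma> (cls e)"
    and q0: "0 < pmf \<sigma> (cls e)"
  shows "measure_pmf.prob (class_thinning M cls \<sigma> p) {S. e \<in> S} = p"
proof -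
  let ?c = "coin_flips M (\<lambda>e. p / pmf \<sigma> (cls e))"
  have "measure_pmf.prob (class_thinning M cls \<sigma> p) {S. e \<in> S}
      = measure_pmf.prob (pair_pmf \<sigma> ?c) ({cls e} \<times> {b. b e})"
    unfolding class_thinning_def using e by (auto intro!: arg_cong[where f="measure_pmf.prob _"])
  also have "\<dots>
      = measure_pmf.prob (map_pmf (\<lambda>(s, b). (s, b e)) (pair_pmf \<sigma> ?c)) ({cls e} \<times> {True})"
    by (auto intro!: arg_cong[where f="measure_pmf.prob _"])
  also have "\<dots>
      = measure_pmf.prob (pair_pmf \<sigma> (map_pmf (\<lambda>b. b e) ?c)) ({cls e} \<times> {True})"
    using map_pair[of id "\<lambda>b. b e" \<sigma> ?c] by (simp add: id_def)
  also have "\<dots> = pmf \<sigma> (cls e) * measure_pmf.prob (map_pmf (\<lambda>b. b e) ?c) {True}"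
    by (subst measure_pmf_prob_product) (auto simp: measure_pmf_single)
  also have "measure_pmf.prob (map_pmf (\<lambda>b. b e) ?c) {True} = measure_pmf.prob ?c {b. b e}"
    by (simp add: vimage_def)
  also have "measure_pmf.prob ?c {b. b e} = p / pmf \<sigma> (cls e)"
    by (rule prob_coin_flips[OF fM e]) (use p pq q0 in auto)
  finally show ?thesis using q0 by simp
qed

lemma expectation_coin_flips:
  assumes "finite M" "e \<in> M" "0 \<le> pr e" "pr e \<le> 1"
  shows "measure_pmf.expectation (coin_flips M pr) (\<lambda>b. of_bool (b e)) = pr e"
proof -
  have "(\<lambda>b. of_bool (b e) :: real) = indicator {b. b e}" by (auto simp: indicator_def)
  then show ?thesis using prob_coin_flips[of M e pr] assms by simp
qed

lemma coin_flips_Hoeffding: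
  assumes fM: "finite M" and KM: "K \<subseteq> M" and Kne: "K \<noteq> {}"
    and pr: "\<forall>e\<in>K. 0 \<le> pr e \<and> pr e \<le> 1" and t: "0 \<le> t"
  shows "measure_pmf.prob (coin_flips M pr) {b. (\<Sum>e\<in>K. of_bool (b e)) \<ge> (\<Sum>e\<in>K. pr e) + t}
           \<le> exp (- 2 * t^2 / real (card K))"
proof -
  have fK: "finite K" using KM fM finite_subset by blast
  have ind0: "prob_space.indep_vars (measure_pmf (coin_flips M pr)) (\<lambda>_. count_space UNIV) (\<lambda>x f. f x) M"
    unfolding coin_flips_def by (rule indep_vars_Pi_pmf[OF fM])
  have ind1: "prob_space.indep_vars (measure_pmf (coin_flips M pr)) (\<lambda>_. count_space UNIV) (\<lambda>x f. f x) K"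
    by (rule prob_space.indep_vars_subset[OF measure_pmf.prob_space_axioms ind0 KM])
  have ind: "prob_space.indep_vars (measure_pmf (coin_flips M pr)) (\<lambda>_. borel) (\<lambda>e b. of_bool (b e) :: real) K"
    by (rule prob_space.indep_vars_compose2[OF measure_pmf.prob_space_axioms ind1]) auto
  interpret H: Hoeffding_ineq "measure_pmf (coin_flips M pr)" K
    "\<lambda>e b. of_bool (b e) :: real" "\<lambda>_. 0" "\<lambda>_. 1"
      "(\<Sum>e\<in>K. measure_pmf.expectation (coin_flips M pr) (\<lambda>b. of_bool (b e)))"
    by unfold_locales (use fK ind in auto)
  have mu: "(\<Sum>e\<in>K. measure_pmf.expectation (coin_flips M pr) (\<lambda>b. of_bool (b e)))
      = (\<Sum>e\<in>K. pr e)"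
    by (intro sum.cong refl expectation_coin_flips[OF fM]) (use KM pr in auto)
  have "(\<Sum>e\<in>K. ((1::real) - 0)^2) = real (card K)" by simp
  moreover have "real (card K) > 0" using fK Kne by (simp add: card_gt_0_iff)
  ultimately show ?thesis using H.Hoeffding_ineq_ge[OF t] unfolding mu by simp
qed

lemma class_thinning_tail:
  assumes fM: "finite M" and p: "0 \<le> p" and q0: "0 < pmf \<sigma> x" and pq: "p \<le> pmf \<sigma> x"
    and Kne: "{e\<in>M. cls e = x} \<noteq> {}" and t: "0 \<le> t"
  shows "measure_pmf.prob (class_thinning M cls \<sigma> p)
           {S. real (card {e\<in>S. cls e = x}) \<ge> real (card {e\<in>M. cls e = x}) * (p / pmf \<sigma> x) + t}
         \<le> exp (- 2 * t^2 / real (card {e\<in>M. cls e = x}))"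
proof -
  define K where "K = {e\<in>M. cls e = x}"
  define pr where "pr e = p / pmf \<sigma> (cls e)" for e
  let ?c = "coin_flips M pr"
  have fK: "finite K" using fM by (simp add: K_def)
  have KM: "K \<subseteq> M" by (auto simp: K_def)
  have prK: "\<forall>e\<in>K. 0 \<le> pr e \<and> pr e \<le> 1" using p q0 pq
    by (auto simp: K_def pr_def)
  have sumK: "(\<Sum>e\<in>K. pr e) = real (card K) * (p / pmf \<sigma> x)" by (simp add: K_def pr_def)
  let ?B = "{b. (\<Sum>e\<in>K. of_bool (b e)) \<ge> (\<Sum>e\<in>K. pr e) + t}"
  have sub: "(\<lambda>(s, b). {e\<in>M. cls e = s \<and> b e}) -`
        {S. real (card {e\<in>S. cls e = x}) \<ge> real (card K) * (p / pmf \<sigma> x) + t} \<subseteq> snd -` ?B"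
  proof (intro subsetI)
    fix y assume y: "y \<in> (\<lambda>(s, b). {e\<in>M. cls e = s \<and> b e}) -`
        {S. real (card {e\<in>S. cls e = x}) \<ge> real (card K) * (p / pmf \<sigma> x) + t}"
    obtain s b where ysb: "y = (s, b)" by (cases y)
    have h: "real (card K) * (p / pmf \<sigma> x) + t
        \<le> real (card {e \<in> {e \<in> M. cls e = s \<and> b e}. cls e = x})"
      using y ysb by simp
    have "card {e \<in> {e \<in> M. cls e = s \<and> b e}. cls e = x} \<le> card {e\<in>K. b e}"
      by (rule card_mono) (use fM in \<open>auto simp: K_def\<close>)
    moreover have "real (card {e\<in>K. b e}) = (\<Sum>e\<in>K. of_bool (b e))"
      using fK by (simp add: real_card_filter_eq_sum of_bool_def)
    ultimately have "(\<Sum>e\<in>K. pr e) + t \<le> (\<Sum>e\<in>K. of_bool (b e))"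
      using h sumK by linarith
    then show "y \<in> snd -` ?B" using ysb by simp
  qed
  have "measure_pmf.prob (class_thinning M cls \<sigma> p)
           {S. real (card {e\<in>S. cls e = x}) \<ge> real (card K) * (p / pmf \<sigma> x) + t}
      \<le> measure_pmf.prob (pair_pmf \<sigma> ?c) (snd -` ?B)"
    unfolding class_thinning_def pr_def[symmetric] measure_map_pmf
    by (rule measure_pmf.finite_measure_mono[OF sub]) simp
  also have "\<dots> = measure_pmf.prob (map_pmf snd (pair_pmf \<sigma> ?c)) ?B" by simp
  also have "\<dots> = measure_pmf.prob ?c ?B" by (simp add: map_snd_pair_pmf)
  also have "\<dots> \<le> exp (- 2 * t^2 / real (card K))"
    by (rule coin_flips_Hoeffding[OF fM KM _ prK t]) (use Kne in \<open>simp add: K_def\<close>)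
  finally show ?thesis unfolding K_def .
qed


lemma finite_set_Pi_pmf:
  assumes "finite A" "\<forall>a\<in>A. finite (set_pmf (D a))"
  shows "finite (set_pmf (Pi_pmf A dflt D))"
proof -
  have "set_pmf (Pi_pmf A dflt D) = PiE_dflt A dflt (set_pmf \<circ> D)"
    by (rule set_Pi_pmf[OF assms(1)])
  moreover have "finite (PiE_dflt A dflt (set_pmf \<circ> D))"
    by (rule finite_PiE_dflt) (use assms in auto)
  ultimately show ?thesis by simp
qed

lemma expectation_Pi_pmf_component:
  fixes f :: "_ \<Rightarrow> real"
  assumes "finite A" "a \<in> A"
  shows "measure_pmf.expectation (Pi_pmf A dflt D) (\<lambda>\<omega>. f (\<omega> a))
      = measure_pmf.expectation (D a) f"
proof -
  have h: "D a = map_pmf (\<lambda>\<omega>. \<omega> a) (Pi_pmf A dflt D)"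
    using Pi_pmf_component[OF assms(1), of a dflt D] assms(2) by simp
  show ?thesis unfolding h by (rule integral_map_pmf[symmetric])
qed

lemma prob_Pi_pmf_component:
  assumes "finite A" "a \<in> A"
  shows "measure_pmf.prob (Pi_pmf A dflt D) {\<omega>. \<omega> a \<in> X}
      = measure_pmf.prob (D a) X"
proof -
  have "D a = map_pmf (\<lambda>\<omega>. \<omega> a) (Pi_pmf A dflt D)"
    using Pi_pmf_component[OF assms(1), of a dflt D] assms(2) by simp
  then show ?thesis by (simp add: vimage_def)
qed

lemma expectation_Pi_pmf_prod_mult:
  fixes G1 G2 :: "'a \<Rightarrow> 'b \<Rightarrow> real"
  assumes fA: "finite A" and fs: "\<forall>a\<in>A. finite (set_pmf (D a))"
    and nn1: "\<And>a S. 0 \<le> G1 a S" and nn2: "\<And>a S. 0 \<le> G2 a S"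
    and one: "\<forall>a\<in>A. (\<forall>S. G1 a S = 1) \<or> (\<forall>S. G2 a S = 1)"
  shows "measure_pmf.expectation (Pi_pmf A dflt D) (\<lambda>\<omega>. (\<Prod>a\<in>A. G1 a (\<omega> a)) * (\<Prod>a\<in>A. G2 a (\<omega> a)))
       = measure_pmf.expectation (Pi_pmf A dflt D) (\<lambda>\<omega>. \<Prod>a\<in>A. G1 a (\<omega> a)) *
         measure_pmf.expectation (Pi_pmf A dflt D) (\<lambda>\<omega>. \<Prod>a\<in>A. G2 a (\<omega> a))"
proof -
  have int: "integrable (measure_pmf (D a)) f" if "a \<in> A" for a and f :: "'b \<Rightarrow> real"
    using fs that by (intro integrable_measure_pmf_finite) auto
  have e1: "measure_pmf.expectation (Pi_pmf A dflt D) (\<lambda>\<omega>. \<Prod>a\<in>A. G1 a (\<omega> a)) =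
      (\<Prod>a\<in>A. measure_pmf.expectation (D a) (G1 a))"
    by (rule expectation_prod_Pi_pmf[OF fA]) (auto intro: int nn1)
  have e2: "measure_pmf.expectation (Pi_pmf A dflt D) (\<lambda>\<omega>. \<Prod>a\<in>A. G2 a (\<omega> a)) =
      (\<Prod>a\<in>A. measure_pmf.expectation (D a) (G2 a))"
    by (rule expectation_prod_Pi_pmf[OF fA]) (auto intro: int nn2)
  have "measure_pmf.expectation (Pi_pmf A dflt D) (\<lambda>\<omega>. (\<Prod>a\<in>A. G1 a (\<omega> a)) * (\<Prod>a\<in>A. G2 a (\<omega> a)))
      = measure_pmf.expectation (Pi_pmf A dflt D) (\<lambda>\<omega>. \<Prod>a\<in>A. G1 a (\<omega> a) * G2 a (\<omega> a))"
    by (simp add: prod.distrib)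
  also have "\<dots>
      = (\<Prod>a\<in>A. measure_pmf.expectation (D a) (\<lambda>S. G1 a S * G2 a S))"
    by (rule expectation_prod_Pi_pmf[OF fA]) (auto intro: int nn1 nn2 mult_nonneg_nonneg)
  also have "\<dots>
      = (\<Prod>a\<in>A. measure_pmf.expectation (D a) (G1 a) * measure_pmf.expectation (D a) (G2 a))"
  proof (intro prod.cong refl)
    fix a assume a: "a \<in> A"
    have o: "(\<forall>S. G1 a S = 1) \<or> (\<forall>S. G2 a S = 1)" using one a by blast
    show "measure_pmf.expectation (D a) (\<lambda>S. G1 a S * G2 a S) =
        measure_pmf.expectation (D a) (G1 a) * measure_pmf.expectation (D a) (G2 a)"
    proof (cases "\<forall>S. G1 a S = 1")
      case True
      then have "G1 a = (\<lambda>_. 1)" by auto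
      then show ?thesis by simp
    next
      case False
      with o have "G2 a = (\<lambda>_. 1)" by auto
      then show ?thesis by simp
    qed
  qed
  also have "\<dots>
      = (\<Prod>a\<in>A. measure_pmf.expectation (D a) (G1 a)) * (\<Prod>a\<in>A. measure_pmf.expectation (D a) (G2 a))"
    by (rule prod.distrib)
  finally show ?thesis using e1 e2 by simp
qed

lemma variance_sum_le_dependency_count:
  fixes Y :: "'u \<Rightarrow> 'w \<Rightarrow> real" and M :: "'w pmf"
  assumes fM: "finite (set_pmf M)" and fU: "finite U"
    and Y01: "\<And>u w. 0 \<le> Y u w \<and> Y u w \<le> 1"
    and ind: "\<And>u v. \<lbrakk>u \<in> U; v \<in> U; \<not> R u v\<rbrakk> \<Longrightarrow>
       measure_pmf.expectation M (\<lambda>w. Y u w * Y v w) =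
       measure_pmf.expectation M (Y u) * measure_pmf.expectation M (Y v)"
  shows "measure_pmf.expectation M (\<lambda>w. ((\<Sum>u\<in>U. Y u w) - (\<Sum>u\<in>U. measure_pmf.expectation M (Y u)))^2)
       \<le> (\<Sum>u\<in>U. real (card {v\<in>U. R u v}))"
proof -
  define \<mu> where "\<mu> u = measure_pmf.expectation M (Y u)" for u
  have int: "integrable (measure_pmf M) f" for f :: "'w \<Rightarrow> real" using fM
    by (rule integrable_measure_pmf_finite)
  have mu01: "0 \<le> \<mu> u" "\<mu> u \<le> 1" for u
  proof -
    show "0 \<le> \<mu> u" unfolding \<mu>_def
      by (intro integral_nonneg_AE AE_pmfI) (use Y01 in auto)
    have "\<mu> u \<le> measure_pmf.expectation M (\<lambda>_. 1::real)" unfolding \<mu>_def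
      by (intro integral_mono_AE AE_pmfI int) (use Y01 in auto)
    then show "\<mu> u \<le> 1" by simp
  qed
  have sq: "((\<Sum>u\<in>U. Y u w) - (\<Sum>u\<in>U. \<mu> u))^2
      = (\<Sum>u\<in>U. \<Sum>v\<in>U. (Y u w - \<mu> u) * (Y v w - \<mu> v))" for w
    by (simp add: power2_eq_square sum_product flip: sum_subtractf)
  have trm: "measure_pmf.expectation M (\<lambda>w. (Y u w - \<mu> u) * (Y v w - \<mu> v))
      = measure_pmf.expectation M (\<lambda>w. Y u w * Y v w) - \<mu> u * \<mu> v" for u v
  proof -
    have "(\<lambda>w. (Y u w - \<mu> u) * (Y v w - \<mu> v))
        = (\<lambda>w. Y u w * Y v w - \<mu> v * Y u w - \<mu> u * Y v w + \<mu> u * \<mu> v)"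
      by (auto simp: algebra_simps)
    then show ?thesis using int by (simp add: \<mu>_def)
  qed
  have "measure_pmf.expectation M (\<lambda>w. ((\<Sum>u\<in>U. Y u w) - (\<Sum>u\<in>U. \<mu> u))^2)
      = (\<Sum>u\<in>U. \<Sum>v\<in>U. measure_pmf.expectation M (\<lambda>w. Y u w * Y v w) - \<mu> u * \<mu> v)"
    unfolding sq using int by (simp add: trm)
  also have "\<dots> \<le> (\<Sum>u\<in>U. \<Sum>v\<in>U. if R u v then 1 else 0)"
  proof (intro sum_mono)
    fix u v assume u: "u \<in> U" and v: "v \<in> U"
    show "measure_pmf.expectation M (\<lambda>w. Y u w * Y v w) - \<mu> u * \<mu> v
        \<le> (if R u v then 1 else 0)"
    proof (cases "R u v")
      case True
      have "measure_pmf.expectation M (\<lambda>w. Y u w * Y v w)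
          \<le> measure_pmf.expectation M (\<lambda>_. 1::real)"
        by (intro integral_mono_AE AE_pmfI int) (use Y01 in \<open>auto intro: mult_le_one\<close>)
      moreover have "0 \<le> \<mu> u * \<mu> v" using mu01 by simp
      ultimately show ?thesis using True by simp
    next
      case False
      then show ?thesis using ind[OF u v False] by (simp add: \<mu>_def)
    qed
  qed
  also have "\<dots> = (\<Sum>u\<in>U. real (card {v\<in>U. R u v}))"
    using fU by (simp add: real_card_filter_eq_sum)
  finally show ?thesis unfolding \<mu>_def .
qed

lemma Pi_pmf_Hoeffding_abs:
  fixes F :: "'a \<Rightarrow> 'b \<Rightarrow> real"
  assumes fA: "finite A"
    and Fb: "\<And>a S. a \<in> A \<Longrightarrow> 0 \<le> F a S \<and> F a S \<le> k a"
    and pos: "(\<Sum>a\<in>A. (k a)^2) > 0" and t: "0 \<le> t"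
  shows "measure_pmf.prob (Pi_pmf A dflt D)
           {\<omega>. \<bar>(\<Sum>a\<in>A. F a (\<omega> a)) - (\<Sum>a\<in>A. measure_pmf.expectation (D a) (F a))\<bar> \<ge> t}
         \<le> 2 * exp (- 2 * t^2 / (\<Sum>a\<in>A. (k a)^2))"
proof -
  let ?M = "Pi_pmf A dflt D"
  have ind0: "prob_space.indep_vars (measure_pmf ?M) (\<lambda>_. count_space UNIV) (\<lambda>x f. f x) A"
    by (rule indep_vars_Pi_pmf[OF fA])
  have ind: "prob_space.indep_vars (measure_pmf ?M) (\<lambda>_. borel) (\<lambda>a \<omega>. F a (\<omega> a)) A"
    by (rule prob_space.indep_vars_compose2[OF measure_pmf.prob_space_axioms ind0]) auto
  have mu: "(\<Sum>a\<in>A. measure_pmf.expectation ?M (\<lambda>\<omega>. F a (\<omega> a)))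
      = (\<Sum>a\<in>A. measure_pmf.expectation (D a) (F a))"
    by (intro sum.cong refl expectation_Pi_pmf_component[OF fA])
  interpret H: Hoeffding_ineq "measure_pmf ?M" A "\<lambda>a \<omega>. F a (\<omega> a)"
    "\<lambda>_. 0" k
      "(\<Sum>a\<in>A. measure_pmf.expectation ?M (\<lambda>\<omega>. F a (\<omega> a)))"
    by unfold_locales (use fA ind Fb in auto)
  show ?thesis using H.Hoeffding_ineq_abs_ge[OF t] pos unfolding mu by simp
qed

lemma expectation_square_deviation_eq:
  fixes X :: "'a \<Rightarrow> real"
  assumes "finite (set_pmf M)"
  shows "measure_pmf.expectation M (\<lambda>\<omega>. (X \<omega> - t)^2)
       = measure_pmf.expectation M (\<lambda>\<omega>. (X \<omega> - measure_pmf.expectation M X)^2)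
         + (measure_pmf.expectation M X - t)^2"
proof -
  define m where "m = measure_pmf.expectation M X"
  have int: "integrable (measure_pmf M) (f :: 'a \<Rightarrow> real)" for f
    using assms by (rule integrable_measure_pmf_finite)
  have "(\<lambda>\<omega>. (X \<omega> - t)^2)
      = (\<lambda>\<omega>. (X \<omega> - m)^2 + 2 * (m - t) * X \<omega> + ((m - t)^2 - 2 * (m - t) * m))"
    by (auto simp: power2_eq_square algebra_simps)
  then have "measure_pmf.expectation M (\<lambda>\<omega>. (X \<omega> - t)^2)
      = measure_pmf.expectation M (\<lambda>\<omega>. (X \<omega> - m)^2) + 2 * (m - t) * m + ((m - t)^2 - 2 * (m - t) * m)"
    using int by (simp add: m_def)
  then show ?thesis by (simp add: m_def)
qed

lemma finite_set_pmf_class_thinning: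
  assumes "finite M" "finite (set_pmf \<sigma>)"
  shows "finite (set_pmf (class_thinning M cls \<sigma> p))"
proof -
  have "finite (set_pmf (coin_flips M (\<lambda>e. p / pmf \<sigma> (cls e))))"
    unfolding coin_flips_def by (rule finite_set_Pi_pmf[OF assms(1)]) auto
  then show ?thesis unfolding class_thinning_def using assms(2) by simp
qed

lemma prob_UN_le_card_mult:
  assumes "finite I" "\<And>i. i \<in> I \<Longrightarrow> measure_pmf.prob M (A i) \<le> b"
  shows "measure_pmf.prob M (\<Union>i\<in>I. A i) \<le> real (card I) * b"
proof -
  have "measure_pmf.prob M (\<Union>i\<in>I. A i) \<le> (\<Sum>i\<in>I. measure_pmf.prob M (A i))"
    by (rule measure_UNION_le[OF assms(1)]) simp
  also have "\<dots> \<le> (\<Sum>i\<in>I. b)" using assms(2) by (rule sum_mono)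
  finally show ?thesis by simp
qed

lemma square_add_le: "((x::real) + y)^2 \<le> 2 * x^2 + 2 * y^2"
proof -
  have "0 \<le> (x - y)^2" by simp
  then show ?thesis by (simp add: power2_eq_square algebra_simps)
qed

section \<open>Random subgraphs sampled independently per colour\<close>

locale colour_sampling =
  fixes E :: "'b set set" and c :: "'b set \<Rightarrow> 'c" and Dist :: "'c \<Rightarrow> 'b set set pmf"
    and p :: real and \<Lambda> :: nat
  assumes finite_E: "finite E"
    and prob_kept: "\<And>e. e \<in> E \<Longrightarrow> measure_pmf.prob (Dist (c e)) {S. e \<in> S} = p"
    and finite_support: "\<And>\<alpha>. \<alpha> \<in> c ` E \<Longrightarrow> finite (set_pmf (Dist \<alpha>))"
    and locally_bounded_E: "\<And>\<alpha> v. card {e\<in>E. c e = \<alpha> \<and> v \<in> e} \<le> \<Lambda>"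
    and p_range: "0 \<le> p" "p \<le> 1"
begin

definition colours where "colours = c ` E"
definition \<Omega> where "\<Omega> = Pi_pmf colours {} Dist"

abbreviation expect :: "(('c \<Rightarrow> 'b set set) \<Rightarrow> real) \<Rightarrow> real" where
  "expect f \<equiv> measure_pmf.expectation \<Omega> f"
definition kept :: "'b set \<Rightarrow> ('c \<Rightarrow> 'b set set) \<Rightarrow> real" where
  "kept e \<omega> = of_bool (e \<in> \<omega> (c e))"
definition kept_edges :: "('c \<Rightarrow> 'b set set) \<Rightarrow> 'b set set" where
  "kept_edges \<omega> = {e\<in>E. e \<in> \<omega> (c e)}"

lemma finite_colours: "finite colours" unfolding colours_def using finite_E by simp

lemma finite_set_\<Omega>: "finite (set_pmf \<Omega>)"
  unfolding \<Omega>_def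
  by (rule finite_set_Pi_pmf[OF finite_colours]) (use finite_support in \<open>auto simp: colours_def\<close>)

lemma integrable_\<Omega>: "integrable (measure_pmf \<Omega>) (f :: _ \<Rightarrow> real)"
  by (rule integrable_measure_pmf_finite[OF finite_set_\<Omega>])

lemma expectation_kept: "e \<in> E \<Longrightarrow> expect (kept e) = p"
proof -
  assume e: "e \<in> E"
  have "expect (kept e) = measure_pmf.expectation (Dist (c e)) (\<lambda>S. of_bool (e \<in> S))"
    unfolding \<Omega>_def kept_def
    by (rule expectation_Pi_pmf_component[OF finite_colours]) (use e in \<open>auto simp: colours_def\<close>)
  also have "(\<lambda>S. of_bool (e \<in> S) :: real) = indicator {S. e \<in> S}"
    by (auto simp: indicator_def)
  finally show ?thesis using prob_kept[OF e] by simp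
qed

definition colour_factor ::
  "'b set set \<Rightarrow> 'c \<Rightarrow> 'b set set \<Rightarrow> real" where
  "colour_factor K \<alpha> S = (\<Prod>e\<in>{e\<in>K. c e = \<alpha>}. of_bool (e \<in> S))"

lemma colour_factor_nonneg: "0 \<le> colour_factor K \<alpha> S" unfolding colour_factor_def
  by (intro prod_nonneg) auto

lemma prod_kept_eq_prod_colour_factor:
  assumes "K \<subseteq> E"
  shows "(\<Prod>e\<in>K. kept e \<omega>)
      = (\<Prod>\<alpha>\<in>colours. colour_factor K \<alpha> (\<omega> \<alpha>))"
proof -
  have fK: "finite K" using assms finite_E finite_subset by blast
  have "(\<Prod>\<alpha>\<in>colours. colour_factor K \<alpha> (\<omega> \<alpha>))
      = (\<Prod>\<alpha>\<in>colours. \<Prod>e\<in>{e\<in>K. c e = \<alpha>}. kept e \<omega>)"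
    unfolding colour_factor_def kept_def by (intro prod.cong refl) auto
  also have "\<dots> = (\<Prod>e\<in>K. kept e \<omega>)"
    by (rule prod.group[OF fK finite_colours]) (use assms in \<open>auto simp: colours_def\<close>)
  finally show ?thesis by simp
qed

lemma colour_factor_eq_1: "\<alpha> \<notin> c ` K \<Longrightarrow> colour_factor K \<alpha> S = 1"
  unfolding colour_factor_def by (intro prod.neutral) auto

lemma expectation_prod_kept_mult:
  assumes K1: "K1 \<subseteq> E" and K2: "K2 \<subseteq> E" and disj: "c ` K1 \<inter> c ` K2 = {}"
  shows "expect (\<lambda>\<omega>. (\<Prod>e\<in>K1. kept e \<omega>) * (\<Prod>e\<in>K2. kept e \<omega>))
       = expect (\<lambda>\<omega>. \<Prod>e\<in>K1. kept e \<omega>) * expect (\<lambda>\<omega>. \<Prod>e\<in>K2. kept e \<omega>)"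
proof -
  have "expect (\<lambda>\<omega>. (\<Prod>\<alpha>\<in>colours. colour_factor K1 \<alpha> (\<omega> \<alpha>)) * (\<Prod>\<alpha>\<in>colours. colour_factor K2 \<alpha> (\<omega> \<alpha>)))
       = expect (\<lambda>\<omega>. \<Prod>\<alpha>\<in>colours. colour_factor K1 \<alpha> (\<omega> \<alpha>)) * expect (\<lambda>\<omega>. \<Prod>\<alpha>\<in>colours. colour_factor K2 \<alpha> (\<omega> \<alpha>))"
    unfolding \<Omega>_def
  proof (rule expectation_Pi_pmf_prod_mult[OF finite_colours])
    show "\<forall>a\<in>colours. finite (set_pmf (Dist a))" using finite_support
      by (auto simp: colours_def)
    show "\<forall>a\<in>colours. (\<forall>S. colour_factor K1 a S = 1)
        \<or> (\<forall>S. colour_factor K2 a S = 1)"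
    proof
      fix a assume "a \<in> colours"
      show "(\<forall>S. colour_factor K1 a S = 1) \<or> (\<forall>S. colour_factor K2 a S = 1)"
      proof (cases "a \<in> c ` K1")
        case True
        then have "a \<notin> c ` K2" using disj by auto
        then show ?thesis using colour_factor_eq_1[of a K2] by simp
      next
        case False
        then show ?thesis using colour_factor_eq_1[of a K1] by simp
      qed
    qed
  qed (auto intro: colour_factor_nonneg)
  then show ?thesis
    by (simp add: prod_kept_eq_prod_colour_factor[OF K1] prod_kept_eq_prod_colour_factor[OF K2])
qed

definition colour_count :: "'b set set \<Rightarrow> 'c \<Rightarrow> real" where
  "colour_count K \<alpha> = real (card {e\<in>K. c e = \<alpha>})"

definition kept_count ::
  "'b set set \<Rightarrow> 'c \<Rightarrow> 'b set set \<Rightarrow> real" where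
  "kept_count K \<alpha> S = (\<Sum>e\<in>{e\<in>K. c e = \<alpha>}. of_bool (e \<in> S))"

lemma sum_kept_count_eq:
  assumes "K \<subseteq> E"
  shows "(\<Sum>\<alpha>\<in>colours. kept_count K \<alpha> (\<omega> \<alpha>))
      = (\<Sum>e\<in>K. kept e \<omega>)"
proof -
  have "(\<Sum>\<alpha>\<in>colours. kept_count K \<alpha> (\<omega> \<alpha>))
      = (\<Sum>\<alpha>\<in>colours. \<Sum>e\<in>{e\<in>K. c e = \<alpha>}. kept e \<omega>)"
    unfolding kept_count_def kept_def by (intro sum.cong refl) auto
  also have "\<dots> = (\<Sum>e\<in>K. kept e \<omega>)"
    using assms finite_E finite_subset by (intro sum.group finite_colours) (auto simp: colours_def)
  finally show ?thesis .
qed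

lemma sum_colour_count_eq:
  assumes "K \<subseteq> E"
  shows "(\<Sum>\<alpha>\<in>colours. colour_count K \<alpha>) = real (card K)"
proof -
  have "(\<Sum>\<alpha>\<in>colours. colour_count K \<alpha>)
      = (\<Sum>\<alpha>\<in>colours. \<Sum>e\<in>{e\<in>K. c e = \<alpha>}. (1::real))"
    unfolding colour_count_def by simp
  also have "\<dots> = (\<Sum>e\<in>K. (1::real))"
    using assms finite_E finite_subset by (intro sum.group finite_colours) (auto simp: colours_def)
  finally show ?thesis by simp
qed

lemma kept_count_range:
  "0 \<le> kept_count K \<alpha> S \<and> kept_count K \<alpha> S \<le> colour_count K \<alpha>"
  using sum_mono[of "{e\<in>K. c e = \<alpha>}" "\<lambda>e. of_bool (e \<in> S) :: real"
    "\<lambda>_. 1"]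
  unfolding kept_count_def colour_count_def by (auto intro: sum_nonneg)

lemma expectation_kept_count:
  assumes "K \<subseteq> E" "\<alpha> \<in> colours"
  shows "measure_pmf.expectation (Dist \<alpha>) (kept_count K \<alpha>)
      = p * colour_count K \<alpha>"
proof -
  have fin: "finite (set_pmf (Dist \<alpha>))" using assms finite_support
    by (auto simp: colours_def)
  have "kept_count K \<alpha>
      = (\<lambda>S. \<Sum>e\<in>{e\<in>K. c e = \<alpha>}. indicator {S. e \<in> S} S)"
    unfolding kept_count_def by (auto simp: indicator_def fun_eq_iff)
  then have "measure_pmf.expectation (Dist \<alpha>) (kept_count K \<alpha>) =
      (\<Sum>e\<in>{e\<in>K. c e = \<alpha>}. measure_pmf.expectation (Dist \<alpha>) (indicator {S. e \<in> S}))"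
    by (simp add: Bochner_Integration.integral_sum integrable_measure_pmf_finite[OF fin])
  also have "\<dots> = (\<Sum>e\<in>{e\<in>K. c e = \<alpha>}. p)"
    using prob_kept assms(1) by (intro sum.cong refl) auto
  finally show ?thesis by (simp add: colour_count_def)
qed

lemma sum_square_colour_count_le:
  assumes "K \<subseteq> E" "\<And>\<alpha>. card {e\<in>K. c e = \<alpha>} \<le> \<Lambda>"
  shows "(\<Sum>\<alpha>\<in>colours. (colour_count K \<alpha>)^2)
      \<le> real \<Lambda> * real (card K)"
proof -
  have "(\<Sum>\<alpha>\<in>colours. (colour_count K \<alpha>)^2)
      \<le> (\<Sum>\<alpha>\<in>colours. real \<Lambda> * colour_count K \<alpha>)"
    using assms(2) unfolding colour_count_def power2_eq_square
    by (intro sum_mono mult_right_mono) auto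
  also have "\<dots> = real \<Lambda> * real (card K)"
    by (simp add: sum_distrib_left[symmetric] sum_colour_count_eq[OF assms(1)])
  finally show ?thesis .
qed

lemma sum_square_colour_count_pos:
  assumes "K \<subseteq> E" "K \<noteq> {}"
  shows "0 < (\<Sum>\<alpha>\<in>colours. (colour_count K \<alpha>)^2)"
proof -
  obtain e where e: "e \<in> K" using assms by blast
  then have "c e \<in> colours" using assms by (auto simp: colours_def)
  moreover have "0 < colour_count K (c e)"
    using e assms finite_E finite_subset unfolding colour_count_def
    by (fastforce simp: card_gt_0_iff)
  ultimately show ?thesis
    by (intro sum_pos2[OF finite_colours, of "c e"]) auto
qed

lemma sum_kept_concentration:
  assumes K: "K \<subseteq> E" "K \<noteq> {}"
    and colour_bound: "\<And>\<alpha>. card {e\<in>K. c e = \<alpha>} \<le> \<Lambda>"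
    and t: "0 \<le> t"
  shows "measure_pmf.prob \<Omega> {\<omega>. \<bar>(\<Sum>e\<in>K. kept e \<omega>) - p * real (card K)\<bar> \<ge> t}
         \<le> 2 * exp (- 2 * t^2 / (real \<Lambda> * real (card K)))"
proof -
  have pos: "0 < (\<Sum>\<alpha>\<in>colours. (colour_count K \<alpha>)^2)"
    by (rule sum_square_colour_count_pos[OF K])
  have mean: "(\<Sum>\<alpha>\<in>colours. measure_pmf.expectation (Dist \<alpha>) (kept_count K \<alpha>)) = p * real (card K)"
    by (simp add: expectation_kept_count[OF K(1)] sum_distrib_left[symmetric] sum_colour_count_eq[OF K(1)])
  have "measure_pmf.prob \<Omega> {\<omega>. \<bar>(\<Sum>e\<in>K. kept e \<omega>) - p * real (card K)\<bar> \<ge> t}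
      \<le> 2 * exp (- 2 * t^2 / (\<Sum>\<alpha>\<in>colours. (colour_count K \<alpha>)^2))"
    unfolding \<Omega>_def sum_kept_count_eq[OF K(1), symmetric] mean[symmetric]
    by (rule Pi_pmf_Hoeffding_abs[OF finite_colours kept_count_range pos t])
  also have "\<dots> \<le> 2 * exp (- 2 * t^2 / (real \<Lambda> * real (card K)))"
    using sum_square_colour_count_le[OF K(1) colour_bound] pos
    by (simp add: frac_le mult_pos_pos)
  finally show ?thesis .
qed


lemma adj_kept_edges:
  "adj (kept_edges \<omega>) u w = (if {u, w} \<in> E then kept {u, w} \<omega> else 0)"
  unfolding adj_def kept_edges_def kept_def by auto

lemma kept_mult_self: "kept e \<omega> * kept e \<omega> = kept e \<omega>" unfolding kept_def
  by auto

definition cherry :: "'b \<Rightarrow> 'b \<Rightarrow> 'b \<Rightarrow> bool" where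
  "cherry w w' u \<longleftrightarrow> {u, w} \<in> E \<and> {u, w'} \<in> E"

definition common_nbr ::
  "'b \<Rightarrow> 'b \<Rightarrow> 'b \<Rightarrow> ('c \<Rightarrow> 'b set set) \<Rightarrow> real" where
  "common_nbr w w' u \<omega> = adj (kept_edges \<omega>) u w * adj (kept_edges \<omega>) u w'"

lemma common_nbr_eq_prod:
  "common_nbr w w' u \<omega>
    = (if cherry w w' u then (\<Prod>e\<in>{{u, w}, {u, w'}}. kept e \<omega>) else 0)"
proof (cases "cherry w w' u")
  case True
  show ?thesis
  proof (cases "{u, w} = {u, w'}")
    case True
    then show ?thesis using \<open>cherry w w' u\<close>
      unfolding common_nbr_def cherry_def adj_kept_edges by (simp add: kept_mult_self)
  next
    case False
    then show ?thesis using \<open>cherry w w' u\<close>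
      unfolding common_nbr_def cherry_def adj_kept_edges by simp
  qed
next
  case False
  then show ?thesis unfolding common_nbr_def cherry_def adj_kept_edges by auto
qed

lemma common_nbr_range:
  "0 \<le> common_nbr w w' u \<omega> \<and> common_nbr w w' u \<omega> \<le> 1"
  unfolding common_nbr_def adj_def by auto

definition cherries_collide ::
  "'b \<Rightarrow> 'b \<Rightarrow> 'b \<Rightarrow> 'b \<Rightarrow> bool" where
  "cherries_collide w w' u v \<longleftrightarrow> cherry w w' u \<and> cherry w w' v
      \<and> c ` {{u, w}, {u, w'}} \<inter> c ` {{v, w}, {v, w'}} \<noteq> {}"

lemma expectation_common_nbr_mult:
  assumes "\<not> cherries_collide w w' u v"
  shows "expect (\<lambda>\<omega>. common_nbr w w' u \<omega> * common_nbr w w' v \<omega>) =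
         expect (common_nbr w w' u) * expect (common_nbr w w' v)"
proof (cases "cherry w w' u \<and> cherry w w' v")
  case True
  then have disj: "c ` {{u, w}, {u, w'}} \<inter> c ` {{v, w}, {v, w'}} = {}" using assms
    unfolding cherries_collide_def by auto
  have K1: "{{u, w}, {u, w'}} \<subseteq> E" and K2: "{{v, w}, {v, w'}} \<subseteq> E" using True
    unfolding cherry_def by auto
  have "(\<lambda>\<omega>. common_nbr w w' u \<omega> * common_nbr w w' v \<omega>)
      = (\<lambda>\<omega>. (\<Prod>e\<in>{{u, w}, {u, w'}}. kept e \<omega>) * (\<Prod>e\<in>{{v, w}, {v, w'}}. kept e \<omega>))"
    using True by (simp add: common_nbr_eq_prod)
  moreover have "common_nbr w w' u
      = (\<lambda>\<omega>. \<Prod>e\<in>{{u, w}, {u, w'}}. kept e \<omega>)" using True by (simp add: common_nbr_eq_prod fun_eq_iff)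
  moreover have "common_nbr w w' v
      = (\<lambda>\<omega>. \<Prod>e\<in>{{v, w}, {v, w'}}. kept e \<omega>)" using True by (simp add: common_nbr_eq_prod fun_eq_iff)
  ultimately show ?thesis using expectation_prod_kept_mult[OF K1 K2 disj] by simp
next
  case False
  then have "common_nbr w w' u = (\<lambda>_. 0) \<or> common_nbr w w' v = (\<lambda>_. 0)"
    by (auto simp: common_nbr_eq_prod fun_eq_iff)
  then show ?thesis by auto
qed

lemma card_colour_nbrs_le:
  "card {v\<in>A. {v, w} \<in> E \<and> c {v, w} = \<beta>} \<le> \<Lambda>"
proof -
  have "card {v\<in>A. {v, w} \<in> E \<and> c {v, w} = \<beta>}
      \<le> card {e\<in>E. c e = \<beta> \<and> w \<in> e}"
  proof (rule card_inj_on_le[where f="\<lambda>v. {v, w}"])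
    show "inj_on (\<lambda>v. {v, w}) {v\<in>A. {v, w} \<in> E \<and> c {v, w} = \<beta>}"
      by (rule inj_onI) (auto simp: doubleton_eq_iff)
    show "(\<lambda>v. {v, w}) ` {v\<in>A. {v, w} \<in> E \<and> c {v, w} = \<beta>}
        \<subseteq> {e\<in>E. c e = \<beta> \<and> w \<in> e}" by auto
    show "finite {e\<in>E. c e = \<beta> \<and> w \<in> e}" using finite_E by simp
  qed
  also have "\<dots> \<le> \<Lambda>" by (rule locally_bounded_E)
  finally show ?thesis .
qed

lemma card_cherries_collide_le:
  assumes fA: "finite A"
  shows "card {v\<in>A. cherries_collide w w' u v} \<le> 4 * \<Lambda>"
proof -
  define Cu where "Cu = c ` {{u, w}, {u, w'}}"
  define nbrs where "nbrs \<beta> x = {v\<in>A. {v, x} \<in> E \<and> c {v, x} = \<beta>}" for \<beta> x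
  have "{v\<in>A. cherries_collide w w' u v} \<subseteq> (\<Union>\<beta>\<in>Cu. nbrs \<beta> w \<union> nbrs \<beta> w')"
    unfolding cherries_collide_def cherry_def Cu_def nbrs_def by auto
  then have "card {v\<in>A. cherries_collide w w' u v} \<le> card (\<Union>\<beta>\<in>Cu. nbrs \<beta> w \<union> nbrs \<beta> w')"
    by (rule card_mono[rotated]) (auto simp: Cu_def nbrs_def fA)
  also have "\<dots> \<le> (\<Sum>\<beta>\<in>Cu. card (nbrs \<beta> w \<union> nbrs \<beta> w'))"
    by (rule card_UN_le) (simp add: Cu_def)
  also have "\<dots> \<le> (\<Sum>\<beta>\<in>Cu. 2 * \<Lambda>)"
  proof (intro sum_mono)
    fix \<beta>
    have "card (nbrs \<beta> w \<union> nbrs \<beta> w') \<le> card (nbrs \<beta> w) + card (nbrs \<beta> w')" by (rule card_Un_le)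
    also have "\<dots> \<le> \<Lambda> + \<Lambda>" unfolding nbrs_def by (intro add_mono card_colour_nbrs_le)
    finally show "card (nbrs \<beta> w \<union> nbrs \<beta> w') \<le> 2 * \<Lambda>" by simp
  qed
  also have "\<dots> \<le> 2 * (2 * \<Lambda>)"
  proof -
    have "card {{u, w}, {u, w'}} \<le> 2" by (cases "{u, w} = {u, w'}") auto
    then have "card Cu \<le> 2" unfolding Cu_def using card_image_le[of "{{u, w}, {u, w'}}" c] by simp
    then show ?thesis by simp
  qed
  finally show ?thesis by simp
qed

lemma variance_codegree_le:
  assumes fA: "finite A"
  shows "expect (\<lambda>\<omega>. ((\<Sum>u\<in>A. common_nbr w w' u \<omega>) - (\<Sum>u\<in>A. expect (common_nbr w w' u)))^2)
       \<le> 4 * real \<Lambda> * real (card A)"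
proof -
  have "expect (\<lambda>\<omega>. ((\<Sum>u\<in>A. common_nbr w w' u \<omega>) - (\<Sum>u\<in>A. expect (common_nbr w w' u)))^2)
       \<le> (\<Sum>u\<in>A. real (card {v\<in>A. cherries_collide w w' u v}))"
    by (rule variance_sum_le_dependency_count[OF finite_set_\<Omega> fA common_nbr_range expectation_common_nbr_mult])
  also have "\<dots> \<le> (\<Sum>u\<in>A. 4 * real \<Lambda>)"
  proof (intro sum_mono)
    fix u
    have "card {v\<in>A. cherries_collide w w' u v} \<le> 4 * \<Lambda>"
      by (rule card_cherries_collide_le[OF fA])
    then have "real (card {v\<in>A. cherries_collide w w' u v}) \<le> real (4 * \<Lambda>)"
      by (simp only: of_nat_le_iff)
    then show "real (card {v\<in>A. cherries_collide w w' u v}) \<le> 4 * real \<Lambda>" by simp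
  qed
  finally show ?thesis by (simp add: mult_ac)
qed

lemma expectation_common_nbr_range:
  "0 \<le> expect (common_nbr w w' u)
      \<and> expect (common_nbr w w' u) \<le> 1"
proof
  show "0 \<le> expect (common_nbr w w' u)"
    by (intro integral_nonneg_AE AE_pmfI) (use common_nbr_range in auto)
  have "expect (common_nbr w w' u) \<le> expect (\<lambda>_. 1::real)"
    by (intro integral_mono_AE AE_pmfI integrable_\<Omega>) (use common_nbr_range in auto)
  then show "expect (common_nbr w w' u) \<le> 1" by simp
qed

lemma expectation_common_nbr_close:
  "\<bar>expect (common_nbr w w' u) - p^2 * (adj E u w * adj E u w')\<bar>
      \<le> (if cherry w w' u \<and> c {u, w} = c {u, w'} then 1 else 0)"
proof (cases "cherry w w' u")
  case False
  then have "common_nbr w w' u = (\<lambda>_. 0)" by (auto simp: common_nbr_eq_prod fun_eq_iff)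
  moreover have "adj E u w * adj E u w' = 0" using False unfolding cherry_def adj_def by auto
  ultimately show ?thesis using False by simp
next
  case True
  have a1: "adj E u w * adj E u w' = 1" using True unfolding cherry_def adj_def by auto
  show ?thesis
  proof (cases "c {u, w} = c {u, w'}")
    case True
    have "0 \<le> p^2" "p^2 \<le> 1" using p_range by (auto simp: power_le_one)
    then show ?thesis
      using True \<open>cherry w w' u\<close> a1 expectation_common_nbr_range[of w w' u]
      by (simp add: abs_le_iff) (use zero_le_power2[of p] in linarith)
  next
    case False
    then have ne: "{u, w} \<noteq> {u, w'}" by auto
    have inx: "{u, w} \<in> E" "{u, w'} \<in> E" using \<open>cherry w w' u\<close>
      unfolding cherry_def by auto
    have "common_nbr w w' u
        = (\<lambda>\<omega>. (\<Prod>e\<in>{{u, w}}. kept e \<omega>) * (\<Prod>e\<in>{{u, w'}}. kept e \<omega>))"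
      using \<open>cherry w w' u\<close> ne by (simp add: common_nbr_eq_prod fun_eq_iff)
    then have "expect (common_nbr w w' u) =
        expect (\<lambda>\<omega>. \<Prod>e\<in>{{u, w}}. kept e \<omega>) * expect (\<lambda>\<omega>. \<Prod>e\<in>{{u, w'}}. kept e \<omega>)"
      using expectation_prod_kept_mult[of "{{u, w}}" "{{u, w'}}"] inx False by simp
    also have "\<dots> = p * p" using expectation_kept[OF inx(1)] expectation_kept[OF inx(2)]
      by simp
    finally show ?thesis using a1 by (simp add: power2_eq_square)
  qed
qed

lemma expectation_codegree_close:
  assumes fA: "finite A"
  shows "\<bar>(\<Sum>u\<in>A. expect (common_nbr w w' u))
      - p^2 * (\<Sum>u\<in>A. adj E u w * adj E u w')\<bar>
       \<le> real (card {u\<in>A. cherry w w' u \<and> c {u, w} = c {u, w'}})"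
proof -
  have "\<bar>(\<Sum>u\<in>A. expect (common_nbr w w' u))
      - p^2 * (\<Sum>u\<in>A. adj E u w * adj E u w')\<bar>
      = \<bar>\<Sum>u\<in>A. expect (common_nbr w w' u) - p^2 * (adj E u w * adj E u w')\<bar>"
    by (simp add: sum_subtractf sum_distrib_left)
  also have "\<dots>
      \<le> (\<Sum>u\<in>A. \<bar>expect (common_nbr w w' u) - p^2 * (adj E u w * adj E u w')\<bar>)"
    by (rule sum_abs)
  also have "\<dots>
      \<le> (\<Sum>u\<in>A. if cherry w w' u \<and> c {u, w} = c {u, w'} then 1 else 0)"
    by (intro sum_mono expectation_common_nbr_close)
  also have "\<dots> = real (card {u\<in>A. cherry w w' u \<and> c {u, w} = c {u, w'}})"
    using fA by (simp add: real_card_filter_eq_sum)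
  finally show ?thesis .
qed

lemma sum_square_monochromatic_cherries_le:
  assumes fA: "finite A" and fB: "finite B"
  shows "(\<Sum>w\<in>B. \<Sum>w'\<in>B. (real (card {u\<in>A. cherry w w' u \<and> c {u, w} = c {u, w'}}))^2)
       \<le> real \<Lambda> * (real (card A))^2 * real (card B)"
proof -
  define s where "s w w' = real (card {u\<in>A. cherry w w' u \<and> c {u, w} = c {u, w'}})"
    for w w'
  have s_le: "s w w' \<le> real (card A)" for w w' unfolding s_def by (simp add: card_mono fA)
  have s_nn: "0 \<le> s w w'" for w w' unfolding s_def by simp
  have "(\<Sum>w\<in>B. \<Sum>w'\<in>B. (s w w')^2)
      \<le> (\<Sum>w\<in>B. \<Sum>w'\<in>B. real (card A) * s w w')"
    by (intro sum_mono) (simp add: power2_eq_square mult_right_mono s_le s_nn)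
  also have "\<dots> = real (card A) * (\<Sum>w\<in>B. \<Sum>w'\<in>B. s w w')"
    by (simp add: sum_distrib_left)
  also have "(\<Sum>w\<in>B. \<Sum>w'\<in>B. s w w')
      = (\<Sum>u\<in>A. \<Sum>w\<in>B. \<Sum>w'\<in>B. of_bool (cherry w w' u \<and> c {u, w} = c {u, w'}))"
  proof -
    have "(\<Sum>w\<in>B. \<Sum>w'\<in>B. s w w')
        = (\<Sum>w\<in>B. \<Sum>w'\<in>B. \<Sum>u\<in>A. of_bool (cherry w w' u \<and> c {u, w} = c {u, w'}))"
      unfolding s_def using fA by (simp add: real_card_filter_eq_sum of_bool_def)
    also have "\<dots>
        = (\<Sum>w\<in>B. \<Sum>u\<in>A. \<Sum>w'\<in>B. of_bool (cherry w w' u \<and> c {u, w} = c {u, w'}))"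
      by (intro sum.cong refl sum.swap)
    also have "\<dots>
        = (\<Sum>u\<in>A. \<Sum>w\<in>B. \<Sum>w'\<in>B. of_bool (cherry w w' u \<and> c {u, w} = c {u, w'}))"
      by (rule sum.swap)
    finally show ?thesis .
  qed
  also have "\<dots> \<le> (\<Sum>u\<in>A. \<Sum>w\<in>B. real \<Lambda>)"
  proof (intro sum_mono)
    fix u w
    have "(\<Sum>w'\<in>B. of_bool (cherry w w' u \<and> c {u, w} = c {u, w'}) :: real)
        \<le> (\<Sum>w'\<in>B. of_bool ({w', u} \<in> E \<and> c {w', u} = c {u, w}))"
      by (intro sum_mono) (auto simp: cherry_def insert_commute)
    also have "\<dots> = real (card {w'\<in>B. {w', u} \<in> E \<and> c {w', u} = c {u, w}})"
      using fB by (simp add: real_card_filter_eq_sum of_bool_def)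
    also have "\<dots> \<le> real \<Lambda>" using card_colour_nbrs_le[of B u "c {u, w}"] by simp
    finally show "(\<Sum>w'\<in>B. of_bool (cherry w w' u \<and> c {u, w} = c {u, w'}) :: real)
        \<le> real \<Lambda>" .
  qed
  also have "(\<Sum>u\<in>A. \<Sum>w\<in>B. real \<Lambda>)
      = real (card A) * real (card B) * real \<Lambda>" by simp
  finally have "(\<Sum>w\<in>B. \<Sum>w'\<in>B. (s w w')^2)
      \<le> real (card A) * (real (card A) * real (card B) * real \<Lambda>)"
    by (simp add: mult_left_mono)
  then show ?thesis unfolding s_def by (simp add: power2_eq_square mult_ac)
qed

lemma expectation_codegree_square_deviation_pair_le:
  assumes fA: "finite A"
  shows "expect (\<lambda>\<omega>. ((\<Sum>u\<in>A. common_nbr w w' u \<omega>) - t)^2)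
    \<le> 4 * real \<Lambda> * real (card A) + 2 * (real (card {u\<in>A. cherry w w' u \<and> c {u, w} = c {u, w'}}))^2
       + 2 * (p^2 * (\<Sum>u\<in>A. adj E u w * adj E u w') - t)^2"
proof -
  define s where "s = real (card {u\<in>A. cherry w w' u \<and> c {u, w} = c {u, w'}})"
  define cod where "cod = (\<Sum>u\<in>A. adj E u w * adj E u w')"
  define X where "X \<omega> = (\<Sum>u\<in>A. common_nbr w w' u \<omega>)" for \<omega>
  define \<mu> where "\<mu> = expect X"
  have \<mu>: "\<mu> = (\<Sum>u\<in>A. expect (common_nbr w w' u))"
    unfolding \<mu>_def X_def by (rule Bochner_Integration.integral_sum) (rule integrable_\<Omega>)
  have "expect (\<lambda>\<omega>. (X \<omega> - t)^2)
      = expect (\<lambda>\<omega>. (X \<omega> - \<mu>)^2) + (\<mu> - t)^2"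
    unfolding \<mu>_def by (rule expectation_square_deviation_eq[OF finite_set_\<Omega>])
  also have "expect (\<lambda>\<omega>. (X \<omega> - \<mu>)^2)
      \<le> 4 * real \<Lambda> * real (card A)"
    unfolding \<mu> X_def by (rule variance_codegree_le[OF fA])
  also have "(\<mu> - t)^2 \<le> 2 * (\<mu> - p^2 * cod)^2 + 2 * (p^2 * cod - t)^2"
    using square_add_le[of "\<mu> - p^2 * cod" "p^2 * cod - t"] by simp
  also have "(\<mu> - p^2 * cod)^2 \<le> s^2"
    using power_mono[OF expectation_codegree_close[OF fA, of w w'], of 2]
    unfolding \<mu> s_def cod_def by simp
  finally show ?thesis unfolding X_def s_def cod_def by simp
qed

lemma expectation_codegree_square_deviation_le:
  assumes fA: "finite A" and fB: "finite B"
  shows "expect (\<lambda>\<omega>. \<Sum>w\<in>B. \<Sum>w'\<in>B. ((\<Sum>u\<in>A. adj (kept_edges \<omega>) u w * adj (kept_edges \<omega>) u w') - t)^2)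
    \<le> 4 * real \<Lambda> * real (card A) * (real (card B))^2 + 2 * real \<Lambda> * (real (card A))^2 * real (card B)
       + 2 * (\<Sum>w\<in>B. \<Sum>w'\<in>B. (p^2 * (\<Sum>u\<in>A. adj E u w * adj E u w') - t)^2)"
proof -
  define s where "s w w' = real (card {u\<in>A. cherry w w' u \<and> c {u, w} = c {u, w'}})"
    for w w'
  define dev where "dev w w' = (p^2 * (\<Sum>u\<in>A. adj E u w * adj E u w') - t)^2" for w w'
  have "expect (\<lambda>\<omega>. \<Sum>w\<in>B. \<Sum>w'\<in>B. ((\<Sum>u\<in>A. common_nbr w w' u \<omega>) - t)^2)
      = (\<Sum>w\<in>B. \<Sum>w'\<in>B. expect (\<lambda>\<omega>. ((\<Sum>u\<in>A. common_nbr w w' u \<omega>) - t)^2))"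
    by (simp add: Bochner_Integration.integral_sum integrable_\<Omega>)
  also have "\<dots>
      \<le> (\<Sum>w\<in>B. \<Sum>w'\<in>B. 4 * real \<Lambda> * real (card A) + 2 * (s w w')^2 + 2 * dev w w')"
    unfolding s_def dev_def by (intro sum_mono expectation_codegree_square_deviation_pair_le[OF fA])
  also have "\<dots> = 4 * real \<Lambda> * real (card A) * (real (card B))^2
      + 2 * (\<Sum>w\<in>B. \<Sum>w'\<in>B. (s w w')^2)
      + 2 * (\<Sum>w\<in>B. \<Sum>w'\<in>B. dev w w')"
    by (simp add: sum.distrib sum_distrib_left power2_eq_square mult_ac)
  also have "\<dots> \<le> 4 * real \<Lambda> * real (card A) * (real (card B))^2
      + 2 * (real \<Lambda> * (real (card A))^2 * real (card B))
      + 2 * (\<Sum>w\<in>B. \<Sum>w'\<in>B. dev w w')"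
    using sum_square_monochromatic_cherries_le[OF fA fB] unfolding s_def by simp
  finally show ?thesis unfolding common_nbr_def dev_def by (simp add: mult_ac)
qed

end

section \<open>Sparsifying a blow-up instance\<close>

lemma pairs_memD: "x \<in> pairs r \<Longrightarrow> fst x \<in> {1..r} \<and> snd x \<in> {1..r} \<and> fst x < snd x"
  unfolding pairs_def by auto

lemma finite_pairs: "finite (pairs r)" unfolding pairs_def
  by (rule finite_subset[of _ "{1..r} \<times> {1..r}"]) auto

lemma card_pairs_le: "real (card (pairs r)) \<le> real r^2"
proof -
  have "card (pairs r) \<le> card ({1..r} \<times> {1..r})" unfolding pairs_def
    by (rule card_mono) auto
  then show ?thesis by (simp add: power2_eq_square flip: of_nat_mult)
qed

lemma zero_pair_notin_pairs: "(0, 0) \<notin> pairs r" unfolding pairs_def by auto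

lemma one_minus_add_le_mult: "0 \<le> (a::real) \<Longrightarrow> 0 \<le> b \<Longrightarrow> 1 - a - b \<le> (1 - a) * (1 - b)"
  by (simp add: algebra_simps)


locale sparsification =
  fixes VH :: "'a set" and EH :: "'a set set" and VG :: "'b set" and EG :: "'b set set"
    and r :: nat and X :: "nat \<Rightarrow> 'a set" and V :: "nat \<Rightarrow> 'b set"
    and c :: "'b set \<Rightarrow> 'c" and n :: nat
    and d \<gamma> d' \<epsilon>' \<epsilon> :: real and \<Lambda> \<Delta> :: nat
  assumes blowup: "blowup_instance VH EH VG EG r X V \<epsilon> d"
    and max_degree: "max_degree_le VH EH \<Delta>"
    and eH_large: "\<forall>(i,j)\<in>pairs r. real (e_betw EH (X i) (X j)) \<ge> \<gamma>^2 * real n"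
    and card_V_close: "\<forall>i\<in>{1..r}. \<bar>real (card (V i)) - real n\<bar> \<le> \<epsilon> * real n"
    and loc_bounded: "locally_bounded c EG \<Lambda>"
    and colour_weights: "\<forall>\<alpha>\<in>c ` EG.
      (\<Sum>(i,j)\<in>pairs r. real (e_col c \<alpha> EG (V i) (V j)) * real (e_betw EH (X i) (X j)))
        \<le> (1 - \<gamma>) * d * real n ^ 2"
    and d_bounds: "0 < d" "d \<le> 1" and r_pos: "1 \<le> r"
    and \<gamma>_bounds: "0 < \<gamma>" "\<gamma> \<le> 1/2"
    and d'_bounds: "0 < d'" "d' \<le> d * \<gamma> / (16 * real r^2)"
    and \<epsilon>'_bounds: "0 < \<epsilon>'" "\<epsilon>' \<le> \<gamma> * d' / 16"
    and \<epsilon>_bounds: "0 < \<epsilon>" "\<epsilon> \<le> d / 2" "\<epsilon> \<le> \<epsilon>'^6 / 8" "\<epsilon> \<le> \<epsilon>'^12 / (512 * real r^2)"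
      "\<epsilon> \<le> \<gamma> / 64"
    and n_pos: "1 \<le> n" and \<Lambda>_pos: "1 \<le> \<Lambda>" and \<Delta>_pos: "1 \<le> \<Delta>"
    and n_large_degree: "4 * real r^2 * real n * exp (- (\<epsilon>'^12 / (64 * real \<Lambda>)) * real n) \<le> 1/4"
    and n_large_colour:
      "4 * real r^4 * (real n)^2 * exp (- (\<gamma>^2 * d'^2 / (256 * (real \<Delta>)^2 * real \<Lambda>)) * real n) \<le> 1/4"
    and n_large_codegree: "96 * real \<Lambda> * real r^2 \<le> real n * (\<epsilon>'^12 / 8)"
begin

definition "p = d' / d"
(* Tolerances for degrees and codegrees in super_regular_of_degrees_codegrees. *)
definition "\<theta> = \<epsilon>'^6 / 4"
definition "\<delta> = \<epsilon>'^12 / 8"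
definition pair_edges :: "nat \<times> nat \<Rightarrow> 'b set set" where
  "pair_edges x = edges_between EG (V (fst x)) (V (snd x))"
definition cross_edges :: "'b set set" where "cross_edges = (\<Union>x\<in>pairs r. pair_edges x)"
definition pair_of :: "'b set \<Rightarrow> nat \<times> nat" where
  "pair_of e = (SOME x. x \<in> pairs r \<and> e \<in> pair_edges x)"

lemma simple_G: "simple_graph VG EG"
  and simple_H: "simple_graph VH EH"
  and VG_eq: "(\<Union>i\<in>{1..r}. V i) = VG"
  and VH_eq: "(\<Union>i\<in>{1..r}. X i) = VH"
  and V_disjoint_family: "disjoint_family_on V {1..r}"
  and card_X_eq_card_V: "\<forall>i\<in>{1..r}. card (X i) = card (V i)"
  and super_regular_G: "\<And>i j. \<lbrakk>i \<in> {1..r}; j \<in> {1..r}; i \<noteq> j\<rbrakk>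
      \<Longrightarrow> super_regular (edges_between EG (V i) (V j)) (V i) (V j) \<epsilon> d"
  using blowup unfolding blowup_instance_def by auto

lemma finite_VG: "finite VG" using simple_G unfolding simple_graph_def by auto

lemma V_subset_VG: "i \<in> {1..r} \<Longrightarrow> V i \<subseteq> VG" using VG_eq by blast
lemma finite_V: "i \<in> {1..r} \<Longrightarrow> finite (V i)"
  using finite_VG V_subset_VG finite_subset by blast
lemma finite_X: "i \<in> {1..r} \<Longrightarrow> finite (X i)"
proof -
  assume i: "i \<in> {1..r}"
  have "finite VH" using simple_H unfolding simple_graph_def by auto
  moreover have "X i \<subseteq> VH" using VH_eq i by blast
  ultimately show ?thesis using finite_subset by blast
qed

lemma V_disjoint: "\<lbrakk>i \<in> {1..r}; j \<in> {1..r}; i \<noteq> j\<rbrakk> \<Longrightarrow> V i \<inter> V j = {}"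
  using V_disjoint_family unfolding disjoint_family_on_def by auto

lemma eps_le_half: "\<epsilon> \<le> 1/2" using \<epsilon>_bounds d_bounds by linarith

lemma card_V_bounds:
  "i \<in> {1..r} \<Longrightarrow> (1 - \<epsilon>) * real n \<le> real (card (V i)) \<and> real (card (V i)) \<le> (1 + \<epsilon>) * real n"
  using card_V_close by (auto simp: abs_le_iff algebra_simps)

lemma card_V_ge: "i \<in> {1..r} \<Longrightarrow> real n / 2 \<le> real (card (V i))"
proof -
  assume i: "i \<in> {1..r}"
  have "(1/2) * real n \<le> (1 - \<epsilon>) * real n" using eps_le_half
    by (intro mult_right_mono) auto
  then show ?thesis using card_V_bounds[OF i] by simp
qed

lemma card_V_le: "i \<in> {1..r} \<Longrightarrow> real (card (V i)) \<le> 2 * real n"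
proof -
  assume i: "i \<in> {1..r}"
  have "(1 + \<epsilon>) * real n \<le> 2 * real n" using eps_le_half
    by (intro mult_right_mono) auto
  then show ?thesis using card_V_bounds[OF i] by simp
qed

lemma V_nonempty: "i \<in> {1..r} \<Longrightarrow> V i \<noteq> {}"
proof
  assume i: "i \<in> {1..r}" and "V i = {}"
  then have "real n / 2 \<le> 0" using card_V_ge[OF i] by simp
  then show False using n_pos by simp
qed

lemma r_squared_ge_1: "1 \<le> real r^2" using r_pos by simp

lemma p_pos: "0 < p" using d'_bounds d_bounds by (simp add: p_def)
lemma p_small: "p \<le> \<gamma> / (16 * real r^2)"
proof -
  have "p = d' / d" by (simp add: p_def)
  also have "\<dots> \<le> (d * \<gamma> / (16 * real r^2)) / d" using d'_bounds d_bounds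
    by (intro divide_right_mono) auto
  also have "\<dots> = \<gamma> / (16 * real r^2)" using d_bounds by simp
  finally show ?thesis .
qed
lemma p_le_1: "p \<le> 1"
proof -
  have "\<gamma> / (16 * real r^2) \<le> 1" using \<gamma>_bounds r_squared_ge_1
    by (simp add: divide_le_eq)
  then show ?thesis using p_small by linarith
qed
lemma p_times_d: "p * d = d'" using d_bounds by (simp add: p_def)

lemma d'_le_1: "d' \<le> 1"
proof -
  have "d * \<gamma> \<le> 1" using d_bounds \<gamma>_bounds by (simp add: mult_le_one)
  moreover have "16 \<le> 16 * real r^2" using r_squared_ge_1 by simp
  ultimately have "d * \<gamma> / (16 * real r^2) \<le> 1" using r_squared_ge_1
    by (simp add: divide_le_eq)
  then show ?thesis using d'_bounds by linarith
qed

lemma eps_le_half_theta: "\<epsilon> \<le> \<theta> / 2" using \<epsilon>_bounds(3)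
  by (simp add: \<theta>_def)
lemma eps'_le_1: "\<epsilon>' \<le> 1"
proof -
  have "d' \<le> 1" by (rule d'_le_1)
  then have "\<gamma> * d' \<le> 1" using \<gamma>_bounds d'_bounds by (simp add: mult_le_one)
  then have "\<gamma> * d' / 16 \<le> 1" by simp
  then show ?thesis using \<epsilon>'_bounds by linarith
qed
lemma theta_pos: "0 < \<theta>" using \<epsilon>'_bounds by (simp add: \<theta>_def)
lemma theta_le: "\<theta> \<le> \<epsilon>' / 4"
proof -
  have "\<epsilon>'^6 \<le> \<epsilon>'^1" using \<epsilon>'_bounds eps'_le_1
    by (intro power_decreasing) auto
  then show ?thesis by (simp add: \<theta>_def)
qed

lemma theta_le_gamma: "\<theta> \<le> \<gamma> * d' / 64" using theta_le \<epsilon>'_bounds by simp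

lemma theta_le_d': "\<theta> \<le> d'"
proof -
  have "\<gamma> * d' \<le> 64 * d'" using \<gamma>_bounds d'_bounds by (intro mult_right_mono) auto
  then show ?thesis using theta_le_gamma by linarith
qed

lemma edge_count_arith:
  "(1 - 5 * \<gamma> / 8) * d' * real n^2
     \<le> (1 - \<gamma> / 2) * ((d' - \<theta>) * ((1 - \<epsilon>) * real n) * ((1 - \<epsilon>) * real n))"
proof -
  have d'_slack: "(1 - \<gamma> / 64) * d' \<le> d' - \<theta>" using theta_le_gamma
    by (simp add: algebra_simps)
  have n_slack: "(1 - \<gamma> / 32) * real n^2
      \<le> ((1 - \<epsilon>) * real n) * ((1 - \<epsilon>) * real n)"
  proof -
    have "1 - \<gamma> / 32 \<le> 1 - \<epsilon> - \<epsilon>" using \<epsilon>_bounds(5) by simp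
    also have "\<dots> \<le> (1 - \<epsilon>) * (1 - \<epsilon>)"
      by (rule one_minus_add_le_mult) (use \<epsilon>_bounds in auto)
    finally have "(1 - \<gamma> / 32) * real n^2
        \<le> (1 - \<epsilon>) * (1 - \<epsilon>) * real n^2" by (rule mult_right_mono) simp
    then show ?thesis by (simp add: power2_eq_square mult_ac)
  qed
  have product_slack: "(1 - \<gamma> / 64) * d' * ((1 - \<gamma> / 32) * real n^2)
      \<le> (d' - \<theta>) * (((1 - \<epsilon>) * real n) * ((1 - \<epsilon>) * real n))"
    by (rule mult_mono[OF d'_slack n_slack]) (use \<gamma>_bounds d'_bounds theta_le_d' in auto)
  have gamma_slack: "1 - 5 * \<gamma> / 8
      \<le> (1 - \<gamma> / 2) * ((1 - \<gamma> / 64) * (1 - \<gamma> / 32))"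
  proof -
    have "1 - \<gamma>/64 - \<gamma>/32 \<le> (1 - \<gamma>/64) * (1 - \<gamma>/32)"
      by (rule one_minus_add_le_mult) (use \<gamma>_bounds in auto)
    then have "(1 - \<gamma>/2) * (1 - \<gamma>/64 - \<gamma>/32)
        \<le> (1 - \<gamma>/2) * ((1 - \<gamma>/64) * (1 - \<gamma>/32))"
      by (rule mult_left_mono) (use \<gamma>_bounds in auto)
    moreover have "1 - \<gamma>/2 - (\<gamma>/64 + \<gamma>/32)
        \<le> (1 - \<gamma>/2) * (1 - (\<gamma>/64 + \<gamma>/32))"
      by (rule one_minus_add_le_mult) (use \<gamma>_bounds in auto)
    ultimately show ?thesis using \<gamma>_bounds by (simp add: algebra_simps)
  qed
  have "(1 - 5 * \<gamma> / 8) * d' * real n^2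
      \<le> ((1 - \<gamma> / 2) * ((1 - \<gamma> / 64) * (1 - \<gamma> / 32))) * (d' * real n^2)"
  proof -
    have "(1 - 5 * \<gamma> / 8) * (d' * real n^2)
        \<le> ((1 - \<gamma> / 2) * ((1 - \<gamma> / 64) * (1 - \<gamma> / 32))) * (d' * real n^2)"
      by (rule mult_right_mono[OF gamma_slack]) (use d'_bounds in simp)
    then show ?thesis by (simp add: mult.assoc)
  qed
  also have "\<dots>
      = (1 - \<gamma> / 2) * ((1 - \<gamma> / 64) * d' * ((1 - \<gamma> / 32) * real n^2))" by (simp add: mult_ac)
  also have "\<dots>
      \<le> (1 - \<gamma> / 2) * ((d' - \<theta>) * (((1 - \<epsilon>) * real n) * ((1 - \<epsilon>) * real n)))"
    by (rule mult_left_mono[OF product_slack]) (use \<gamma>_bounds in auto)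
  finally show ?thesis by (simp add: mult_ac)
qed


lemma pair_edges_unique:
  assumes x: "x \<in> pairs r" and y: "y \<in> pairs r" and ex: "e \<in> pair_edges x"
    and ey: "e \<in> pair_edges y"
  shows "x = y"
proof -
  obtain i j where xij: "x = (i, j)" by (cases x)
  obtain k l where ykl: "y = (k, l)" by (cases y)
  have ij: "i \<in> {1..r}" "j \<in> {1..r}" "i < j" using pairs_memD[OF x] xij by auto
  have kl: "k \<in> {1..r}" "l \<in> {1..r}" "k < l" using pairs_memD[OF y] ykl by auto
  obtain u v where uv: "u \<in> V i" "v \<in> V j" "e = {u, v}" using ex xij
    unfolding pair_edges_def edges_between_def by auto
  obtain u' v' where uv': "u' \<in> V k" "v' \<in> V l" "e = {u', v'}" using ey ykl
    unfolding pair_edges_def edges_between_def by auto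
  have mem: "\<And>a s t. \<lbrakk>a \<in> V s; a \<in> V t; s \<in> {1..r}; t \<in> {1..r}\<rbrakk> \<Longrightarrow> s = t"
    using V_disjoint by blast
  from uv uv' have "(u = u' \<and> v = v') \<or> (u = v' \<and> v = u')" by (metis doubleton_eq_iff)
  then show ?thesis
  proof
    assume "u = u' \<and> v = v'"
    then have "i = k" "j = l" using mem uv uv' ij kl by metis+
    then show ?thesis using xij ykl by simp
  next
    assume "u = v' \<and> v = u'"
    then have "i = l" "j = k" using mem uv uv' ij kl by metis+
    then show ?thesis using ij kl by simp
  qed
qed

lemma pair_of_eq: "\<lbrakk>x \<in> pairs r; e \<in> pair_edges x\<rbrakk> \<Longrightarrow> pair_of e = x"
proof -
  assume x: "x \<in> pairs r" and e: "e \<in> pair_edges x"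
  have "pair_of e \<in> pairs r \<and> e \<in> pair_edges (pair_of e)" unfolding pair_of_def
    by (rule someI[of _ x]) (use x e in auto)
  then show ?thesis using pair_edges_unique x e by blast
qed

lemma cross_edges_subset: "cross_edges \<subseteq> EG"
  unfolding cross_edges_def pair_edges_def edges_between_def by auto
lemma finite_EG: "finite EG"
proof -
  have "EG \<subseteq> Pow VG" using simple_G unfolding simple_graph_def by auto
  then show ?thesis using finite_VG finite_subset by blast
qed
lemma finite_cross_edges: "finite cross_edges" using cross_edges_subset finite_EG finite_subset
  by blast

lemma pair_of_cross_edge: "e \<in> cross_edges \<Longrightarrow> pair_of e \<in> pairs r \<and> e \<in> pair_edges (pair_of e)"
  unfolding cross_edges_def using pair_of_eq by auto


definition eH :: "nat \<times> nat \<Rightarrow> real" where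
  "eH x = real (e_betw EH (X (fst x)) (X (snd x)))"
definition ecol :: "'c \<Rightarrow> nat \<times> nat \<Rightarrow> real" where
  "ecol \<alpha> x = real (e_col c \<alpha> EG (V (fst x)) (V (snd x)))"
definition pair_weight :: "'c \<Rightarrow> nat \<times> nat \<Rightarrow> real" where
  "pair_weight \<alpha> x = ecol \<alpha> x * eH x / ((1 - 3 * \<gamma> / 4) * d * real n ^ 2) + p"

lemma weight_denominator_pos: "(1 - 3 * \<gamma> / 4) * d * real n ^ 2 > 0"
  using \<gamma>_bounds d_bounds n_pos by simp

lemma p_le_pair_weight: "p \<le> pair_weight \<alpha> x"
proof -
  have "0 \<le> ecol \<alpha> x * eH x / ((1 - 3 * \<gamma> / 4) * d * real n ^ 2)"
    using weight_denominator_pos by (simp add: ecol_def eH_def)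
  then show ?thesis by (simp add: pair_weight_def)
qed

lemma sum_pair_weight_le_1: "\<alpha> \<in> c ` EG \<Longrightarrow> (\<Sum>x\<in>pairs r. pair_weight \<alpha> x) \<le> 1"
proof -
  assume a: "\<alpha> \<in> c ` EG"
  define D where "D = (1 - 3 * \<gamma> / 4) * d * real n ^ 2"
  have D: "D > 0" using weight_denominator_pos by (simp add: D_def)
  have colour_sum: "(\<Sum>x\<in>pairs r. ecol \<alpha> x * eH x) \<le> (1 - \<gamma>) * d * real n ^ 2"
  proof -
    obtain e0 where "e0 \<in> EG" "\<alpha> = c e0" using a by blast
    then show ?thesis using colour_weights unfolding ecol_def eH_def by (auto simp: case_prod_beta)
  qed
  have "(\<Sum>x\<in>pairs r. pair_weight \<alpha> x)
      = (\<Sum>x\<in>pairs r. ecol \<alpha> x * eH x) / D + real (card (pairs r)) * p"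
    unfolding pair_weight_def D_def by (simp add: sum.distrib sum_divide_distrib)
  also have "\<dots> \<le> (1 - \<gamma>) * d * real n ^ 2 / D
      + real r^2 * (\<gamma> / (16 * real r^2))"
    using colour_sum D card_pairs_le p_small p_pos by (intro add_mono divide_right_mono mult_mono) auto
  also have "real r^2 * (\<gamma> / (16 * real r^2)) = \<gamma> / 16" using r_pos by simp
  also have "(1 - \<gamma>) * d * real n ^ 2 / D = (1 - \<gamma>) / (1 - 3 * \<gamma> / 4)"
    using d_bounds n_pos \<gamma>_bounds unfolding D_def by (simp add: field_simps)
  also have "(1 - \<gamma>) / (1 - 3 * \<gamma> / 4) \<le> 1 - \<gamma> / 4"
  proof -
    have "(1 - \<gamma>) \<le> (1 - \<gamma> / 4) * (1 - 3 * \<gamma> / 4)" using \<gamma>_bounds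
      by (simp add: algebra_simps power2_eq_square)
    then show ?thesis using \<gamma>_bounds by (simp add: divide_le_eq)
  qed
  finally show ?thesis using \<gamma>_bounds by linarith
qed

(* The mass missing from the pair weights goes to the non-pair (0, 0): with that probability
   no edge of colour \<alpha> is kept. *)
definition pair_choice :: "'c \<Rightarrow> (nat \<times> nat) pmf" where
  "pair_choice \<alpha> =
     (SOME \<pi>. (\<forall>x\<in>pairs r. pmf \<pi> x = pair_weight \<alpha> x) \<and> set_pmf \<pi> \<subseteq> insert (0, 0) (pairs r))"

lemma pair_choice_props:
  "\<alpha> \<in> c ` EG \<Longrightarrow> (\<forall>x\<in>pairs r. pmf (pair_choice \<alpha>) x = pair_weight \<alpha> x) \<and>
     set_pmf (pair_choice \<alpha>) \<subseteq> insert (0, 0) (pairs r)"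
proof -
  assume a: "\<alpha> \<in> c ` EG"
  have "\<exists>\<pi>. (\<forall>x\<in>pairs r. pmf \<pi> x = pair_weight \<alpha> x)
      \<and> set_pmf \<pi> \<subseteq> insert (0, 0) (pairs r)"
  proof (rule exists_pmf_extending_weights[OF finite_pairs zero_pair_notin_pairs])
    show "\<forall>x\<in>pairs r. 0 \<le> pair_weight \<alpha> x" using p_le_pair_weight p_pos
      by (meson less_le_trans less_le)
    show "(\<Sum>x\<in>pairs r. pair_weight \<alpha> x) \<le> 1"
      by (rule sum_pair_weight_le_1[OF a])
  qed
  then show ?thesis unfolding pair_choice_def by (rule someI_ex)
qed

definition colour_dist :: "'c \<Rightarrow> 'b set set pmf" where
  "colour_dist \<alpha> = class_thinning {e\<in>cross_edges. c e = \<alpha>} pair_of (pair_choice \<alpha>) p"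

sublocale M: colour_sampling cross_edges c colour_dist p \<Lambda>
proof
  show "finite cross_edges" by (rule finite_cross_edges)
next
  fix e assume e: "e \<in> cross_edges"
  have clsP: "pair_of e \<in> pairs r" using pair_of_cross_edge[OF e] by simp
  have q: "pmf (pair_choice (c e)) (pair_of e) = pair_weight (c e) (pair_of e)"
    using pair_choice_props[of "c e"] e cross_edges_subset clsP by auto
  show "measure_pmf.prob (colour_dist (c e)) {S. e \<in> S} = p"
    unfolding colour_dist_def
  proof (rule prob_class_thinning_mem)
    show "finite {e' \<in> cross_edges. c e' = c e}" using finite_cross_edges by simp
    show "e \<in> {e' \<in> cross_edges. c e' = c e}" using e by simp
    show "0 \<le> p" using p_pos by simp
    show "p \<le> pmf (pair_choice (c e)) (pair_of e)" using q p_le_pair_weight by simp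
    show "0 < pmf (pair_choice (c e)) (pair_of e)"
      using q p_le_pair_weight[of "c e" "pair_of e"] p_pos by simp
  qed
next
  fix \<alpha> assume a: "\<alpha> \<in> c ` cross_edges"
  have "\<alpha> \<in> c ` EG" using a cross_edges_subset by blast
  then have "set_pmf (pair_choice \<alpha>) \<subseteq> insert (0, 0) (pairs r)"
    using pair_choice_props by blast
  then have "finite (set_pmf (pair_choice \<alpha>))" using finite_pairs finite_subset by blast
  then show "finite (set_pmf (colour_dist \<alpha>))" unfolding colour_dist_def
    by (intro finite_set_pmf_class_thinning) (use finite_cross_edges in simp_all)
next
  fix \<alpha> v
  have "card {e \<in> cross_edges. c e = \<alpha> \<and> v \<in> e}
      \<le> card {e \<in> EG. c e = \<alpha> \<and> v \<in> e}"
    by (rule card_mono) (use finite_EG cross_edges_subset in auto)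
  also have "\<dots> \<le> \<Lambda>" using loc_bounded unfolding locally_bounded_def by auto
  finally show "card {e \<in> cross_edges. c e = \<alpha> \<and> v \<in> e} \<le> \<Lambda>" .
next
  show "0 \<le> p" using p_pos by simp
  show "p \<le> 1" by (rule p_le_1)
qed


lemma adj_cross_edges:
  assumes i: "i \<in> {1..r}" and j: "j \<in> {1..r}" and ij: "i \<noteq> j" and v: "v \<in> V i"
    and w: "w \<in> V j"
  shows "adj cross_edges v w = adj EG v w"
proof -
  have "{v, w} \<in> cross_edges" if vw: "{v, w} \<in> EG"
  proof (cases "i < j")
    case True
    have "(i, j) \<in> pairs r" using i j True by (simp add: pairs_def)
    moreover have "{v, w} \<in> pair_edges (i, j)" using vw v w
      unfolding pair_edges_def edges_between_def by auto
    ultimately show ?thesis unfolding cross_edges_def by blast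
  next
    case False
    then have "j < i" using ij by simp
    then have "(j, i) \<in> pairs r" using i j by (simp add: pairs_def)
    moreover have "{v, w} \<in> pair_edges (j, i)" using vw v w
      unfolding pair_edges_def edges_between_def by (auto simp: insert_commute)
    ultimately show ?thesis unfolding cross_edges_def by blast
  qed
  then show ?thesis using cross_edges_subset unfolding adj_def by auto
qed

lemma card_VG_le: "real (card VG) \<le> 2 * real r * real n"
proof -
  have "card VG \<le> (\<Sum>i\<in>{1..r}. card (V i))" unfolding VG_eq[symmetric]
    by (rule card_UN_le) simp
  then have "real (card VG) \<le> (\<Sum>i\<in>{1..r}. real (card (V i)))"
    by (simp flip: of_nat_sum)
  also have "\<dots> \<le> (\<Sum>i\<in>{1..r}. 2 * real n)" by (intro sum_mono card_V_le) auto
  finally show ?thesis by simp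
qed

definition nbr_edges :: "'b \<Rightarrow> nat \<Rightarrow> 'b set set" where
  "nbr_edges v j = (\<lambda>w. {v, w}) ` {w\<in>V j. {v, w} \<in> cross_edges}"

lemma nbr_edges_sums:
  assumes j: "j \<in> {1..r}"
  shows "(\<Sum>w\<in>V j. adj (M.kept_edges \<omega>) v w)
      = (\<Sum>e\<in>nbr_edges v j. M.kept e \<omega>)"
    and "real (card (nbr_edges v j)) = (\<Sum>w\<in>V j. adj cross_edges v w)"
proof -
  have inj: "inj_on (\<lambda>w. {v, w}) {w\<in>V j. {v, w} \<in> cross_edges}"
    by (rule inj_onI) (auto simp: doubleton_eq_iff)
  have "(\<Sum>w\<in>V j. adj (M.kept_edges \<omega>) v w)
      = (\<Sum>w\<in>{w\<in>V j. {v, w} \<in> cross_edges}. M.kept {v, w} \<omega>)"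
    using finite_V[OF j] by (simp add: M.adj_kept_edges sum.If_cases Int_def)
  also have "\<dots> = (\<Sum>e\<in>nbr_edges v j. M.kept e \<omega>)" unfolding nbr_edges_def
    by (rule sum.reindex[OF inj, symmetric, unfolded comp_def])
  finally show "(\<Sum>w\<in>V j. adj (M.kept_edges \<omega>) v w)
      = (\<Sum>e\<in>nbr_edges v j. M.kept e \<omega>)" .
  have "real (card (nbr_edges v j)) = real (card {w\<in>V j. {v, w} \<in> cross_edges})"
    unfolding nbr_edges_def using card_image[OF inj] by simp
  also have "\<dots> = (\<Sum>w\<in>V j. adj cross_edges v w)" using finite_V[OF j]
    by (simp add: real_card_filter_eq_sum adj_def)
  finally show "real (card (nbr_edges v j)) = (\<Sum>w\<in>V j. adj cross_edges v w)" .
qed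

lemma card_nbr_edges_le:
  "j \<in> {1..r} \<Longrightarrow> real (card (nbr_edges v j)) \<le> real (card (V j))"
proof -
  assume j: "j \<in> {1..r}"
  have "card (nbr_edges v j) \<le> card {w\<in>V j. {v, w} \<in> cross_edges}"
    unfolding nbr_edges_def by (rule card_image_le) (simp add: finite_V[OF j])
  also have "\<dots> \<le> card (V j)" by (rule card_mono) (auto simp: finite_V[OF j])
  finally show ?thesis by simp
qed

definition degree_deviation ::
  "'b \<Rightarrow> nat \<Rightarrow> ('c \<Rightarrow> 'b set set) set" where
  "degree_deviation v j = {\<omega>. \<theta> * real (card (V j)) / 2
                              \<le> \<bar>(\<Sum>e\<in>nbr_edges v j. M.kept e \<omega>) - p * real (card (nbr_edges v j))\<bar>}"

definition bad_degree :: "('c \<Rightarrow> 'b set set) set" where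
  "bad_degree = (\<Union>(v, j)\<in>{(v, j). j \<in> {1..r} \<and> v \<in> VG - V j}. degree_deviation v j)"

lemma prob_degree_deviation_le:
  assumes j: "j \<in> {1..r}"
  shows "measure_pmf.prob M.\<Omega> (degree_deviation v j)
      \<le> 2 * exp (- (\<epsilon>'^12 / (64 * real \<Lambda>)) * real n)"
proof (cases "nbr_edges v j = {}")
  case True
  have "0 < \<theta> * real (card (V j)) / 2"
    using theta_pos V_nonempty[OF j] finite_V[OF j] by (simp add: card_gt_0_iff)
  then show ?thesis using True by (simp add: degree_deviation_def)
next
  case False
  define a where "a = \<epsilon>'^12 / (64 * real \<Lambda>)"
  have nbr_cross: "nbr_edges v j \<subseteq> cross_edges" unfolding nbr_edges_def by auto
  have colour_bound: "card {e\<in>nbr_edges v j. c e = \<alpha>} \<le> \<Lambda>" for \<alpha>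
    using card_mono[of "{e\<in>cross_edges. c e = \<alpha> \<and> v \<in> e}"
      "{e\<in>nbr_edges v j. c e = \<alpha>}"]
      M.locally_bounded_E[of \<alpha> v] finite_cross_edges by (force simp: nbr_edges_def)
  have Nj: "real n / 2 \<le> real (card (V j))" by (rule card_V_ge[OF j])
  have cE: "0 < real (card (nbr_edges v j))"
    using False nbr_cross finite_cross_edges by (simp add: card_gt_0_iff finite_subset)
  have L: "real \<Lambda> \<ge> 1" using \<Lambda>_pos by simp
  have "measure_pmf.prob M.\<Omega>
      {\<omega>. \<theta> * real (card (V j)) / 2 \<le> \<bar>(\<Sum>e\<in>nbr_edges v j. M.kept e \<omega>) - p * real (card (nbr_edges v j))\<bar>}
      \<le> 2 * exp (- 2 * (\<theta> * real (card (V j)) / 2)^2 / (real \<Lambda> * real (card (nbr_edges v j))))"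
    by (rule M.sum_kept_concentration[OF nbr_cross False colour_bound]) (use theta_pos in simp)
  also have "\<dots> \<le> 2 * exp (- a * real n)"
  proof -
    have "a * real n = (\<theta>^2 / (4 * real \<Lambda>)) * real n"
      by (simp add: a_def \<theta>_def power2_eq_square field_simps)
    also have "\<dots> \<le> (\<theta>^2 / (4 * real \<Lambda>)) * (2 * real (card (V j)))"
      using Nj L by (intro mult_left_mono) auto
    also have "\<dots>
        = \<theta>^2 * real (card (V j))^2 / (2 * real \<Lambda> * real (card (V j)))"
      using Nj n_pos L by (simp add: power2_eq_square field_simps)
    also have "\<dots>
        \<le> \<theta>^2 * real (card (V j))^2 / (2 * real \<Lambda> * real (card (nbr_edges v j)))"
      using cE L card_nbr_edges_le[OF j, of v] by (intro divide_left_mono mult_left_mono) auto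
    also have "\<dots>
        = 2 * (\<theta> * real (card (V j)) / 2)^2 / (real \<Lambda> * real (card (nbr_edges v j)))"
      by (simp add: power2_eq_square field_simps)
    finally show ?thesis by simp
  qed
  finally show ?thesis unfolding a_def degree_deviation_def by simp
qed

lemma card_vertex_part_pairs_le:
  "real (card {(v, j). j \<in> {1..r} \<and> v \<in> VG - V j}) \<le> 2 * real r^2 * real n"
proof -
  have "card {(v, j). j \<in> {1..r} \<and> v \<in> VG - V j} \<le> card (VG \<times> {1..r})"
    by (rule card_mono) (auto simp: finite_VG)
  then have "real (card {(v, j). j \<in> {1..r} \<and> v \<in> VG - V j})
      \<le> real (card VG) * real r"
    by (simp add: card_cartesian_product flip: of_nat_mult)
  also have "\<dots> \<le> 2 * real r * real n * real r" using card_VG_le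
    by (intro mult_right_mono) auto
  finally show ?thesis by (simp add: power2_eq_square mult_ac)
qed

lemma prob_bad_degree: "measure_pmf.prob M.\<Omega> bad_degree \<le> 1/4"
proof -
  have "finite {(v, j). j \<in> {1..r} \<and> v \<in> VG - V j}"
    by (rule finite_subset[of _ "VG \<times> {1..r}"]) (auto simp: finite_VG)
  then have "measure_pmf.prob M.\<Omega> bad_degree
      \<le> real (card {(v, j). j \<in> {1..r} \<and> v \<in> VG - V j}) * (2 * exp (- (\<epsilon>'^12 / (64 * real \<Lambda>)) * real n))"
    unfolding bad_degree_def
    by (rule prob_UN_le_card_mult) (clarify, rule prob_degree_deviation_le, simp)
  also have "\<dots>
      \<le> 2 * real r^2 * real n * (2 * exp (- (\<epsilon>'^12 / (64 * real \<Lambda>)) * real n))"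
    by (intro mult_right_mono card_vertex_part_pairs_le) simp
  also have "\<dots> \<le> 1/4" using n_large_degree by simp
  finally show ?thesis .
qed


definition colour_class_size :: "'c \<Rightarrow> nat \<times> nat \<Rightarrow> nat" where
  "colour_class_size \<alpha> x = card {e\<in>{e\<in>cross_edges. c e = \<alpha>}. pair_of e = x}"

definition slack :: "nat \<times> nat \<Rightarrow> real" where
  "slack x = \<gamma> * d' * real n^2 / (8 * eH x)"

definition colour_class_excess ::
  "'c \<Rightarrow> nat \<times> nat \<Rightarrow> ('c \<Rightarrow> 'b set set) set" where
  "colour_class_excess \<alpha> x
      = {\<omega>. real (colour_class_size \<alpha> x) * (p / pmf (pair_choice \<alpha>) x) + slack x
                                  \<le> real (card {e\<in>\<omega> \<alpha>. pair_of e = x})}"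

definition bad_colour_class :: "('c \<Rightarrow> 'b set set) set" where
  "bad_colour_class =
     (\<Union>(\<alpha>, x)\<in>{(\<alpha>, x). \<alpha> \<in> M.colours \<and> x \<in> pairs r \<and> colour_class_size \<alpha> x > 0}. colour_class_excess \<alpha> x)"

lemma eH_ge: "x \<in> pairs r \<Longrightarrow> eH x \<ge> \<gamma>^2 * real n"
  using eH_large unfolding eH_def by (cases x) auto

lemma eH_pos:
  assumes "x \<in> pairs r"
  shows "0 < eH x"
proof -
  have "0 < \<gamma>^2 * real n" using \<gamma>_bounds n_pos by simp
  then show ?thesis using eH_ge[OF assms] by linarith
qed

lemma eH_le: "x \<in> pairs r \<Longrightarrow> eH x \<le> 2 * real \<Delta> * real n"
proof -
  assume x: "x \<in> pairs r"
  define i where "i = fst x"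
  define j where "j = snd x"
  have i: "i \<in> {1..r}" and j: "j \<in> {1..r}" using pairs_memD[OF x]
    by (auto simp: i_def j_def)
  have XiH: "X i \<subseteq> VH" using VH_eq i by blast
  have "edges_between EH (X i) (X j) \<subseteq> (\<Union>a\<in>X i. {e\<in>EH. a \<in> e})"
    unfolding edges_between_def by auto
  then have "card (edges_between EH (X i) (X j))
      \<le> card (\<Union>a\<in>X i. {e\<in>EH. a \<in> e})"
  proof (rule card_mono[rotated])
    have "finite EH"
    proof -
      have "EH \<subseteq> Pow VH" using simple_H unfolding simple_graph_def by auto
      moreover have "finite VH" using simple_H unfolding simple_graph_def by auto
      ultimately show ?thesis using finite_subset by blast
    qed
    then show "finite (\<Union>a\<in>X i. {e\<in>EH. a \<in> e})" using finite_X[OF i] by auto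
  qed
  also have "\<dots> \<le> (\<Sum>a\<in>X i. card {e\<in>EH. a \<in> e})"
    by (rule card_UN_le[OF finite_X[OF i]])
  also have "\<dots> \<le> (\<Sum>a\<in>X i. \<Delta>)"
    by (intro sum_mono) (use max_degree XiH in \<open>auto simp: max_degree_le_def\<close>)
  also have "\<dots> = \<Delta> * card (V i)" using card_X_eq_card_V i by simp
  finally have "eH x \<le> real \<Delta> * real (card (V i))"
    unfolding eH_def e_betw_def i_def j_def by (simp flip: of_nat_mult)
  also have "\<dots> \<le> real \<Delta> * (2 * real n)" using card_V_le[OF i]
    by (intro mult_left_mono) auto
  finally show ?thesis by simp
qed

lemma colour_class_size_le:
  "x \<in> pairs r \<Longrightarrow> real (colour_class_size \<alpha> x)
    \<le> 2 * real \<Lambda> * real n"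
proof -
  assume x: "x \<in> pairs r"
  define i where "i = fst x"
  have i: "i \<in> {1..r}" using pairs_memD[OF x] by (auto simp: i_def)
  have "{e\<in>{e\<in>cross_edges. c e = \<alpha>}. pair_of e = x}
      \<subseteq> (\<Union>u\<in>V i. {e\<in>cross_edges. c e = \<alpha> \<and> u \<in> e})"
  proof
    fix e assume e: "e \<in> {e\<in>{e\<in>cross_edges. c e = \<alpha>}. pair_of e = x}"
    then have "e \<in> pair_edges x" using pair_of_cross_edge by auto
    then obtain u v where "u \<in> V i" "e = {u, v}"
      unfolding pair_edges_def edges_between_def i_def by auto
    then show "e \<in> (\<Union>u\<in>V i. {e\<in>cross_edges. c e = \<alpha> \<and> u \<in> e})"
      using e by auto
  qed
  then have "colour_class_size \<alpha> x
      \<le> card (\<Union>u\<in>V i. {e\<in>cross_edges. c e = \<alpha> \<and> u \<in> e})"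
    unfolding colour_class_size_def
    by (rule card_mono[rotated]) (use finite_V[OF i] finite_cross_edges in auto)
  also have "\<dots>
      \<le> (\<Sum>u\<in>V i. card {e\<in>cross_edges. c e = \<alpha> \<and> u \<in> e})" by (rule card_UN_le[OF finite_V[OF i]])
  also have "\<dots> \<le> (\<Sum>u\<in>V i. \<Lambda>)" by (intro sum_mono M.locally_bounded_E)
  also have "\<dots> = \<Lambda> * card (V i)" by simp
  finally have "real (colour_class_size \<alpha> x) \<le> real \<Lambda> * real (card (V i))"
    by (simp flip: of_nat_mult)
  also have "\<dots> \<le> real \<Lambda> * (2 * real n)" using card_V_le[OF i]
    by (intro mult_left_mono) auto
  finally show ?thesis by simp
qed

lemma card_EG_le: "real (card EG) \<le> (real (card VG))^2"
proof -
  have "EG \<subseteq> (\<lambda>(u, v). {u, v}) ` (VG \<times> VG)"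
  proof
    fix e assume "e \<in> EG"
    then obtain u v where "e = {u, v}" "u \<in> VG" "v \<in> VG" using simple_G
      unfolding simple_graph_def by blast
    then show "e \<in> (\<lambda>(u, v). {u, v}) ` (VG \<times> VG)" by auto
  qed
  then have "card EG \<le> card ((\<lambda>(u, v). {u, v}) ` (VG \<times> VG))"
    by (rule card_mono[rotated]) (simp add: finite_VG)
  also have "\<dots> \<le> card (VG \<times> VG)" by (rule card_image_le) (simp add: finite_VG)
  finally show ?thesis by (simp add: card_cartesian_product power2_eq_square flip: of_nat_mult)
qed

lemma slack_ge:
  assumes x: "x \<in> pairs r"
  shows "\<gamma> * d' * real n / (16 * real \<Delta>) \<le> slack x"
proof -
  have "\<gamma> * d' * real n / (16 * real \<Delta>)
      = \<gamma> * d' * real n^2 / (8 * (2 * real \<Delta> * real n))"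
    using n_pos by (simp add: power2_eq_square)
  also have "\<dots> \<le> \<gamma> * d' * real n^2 / (8 * eH x)"
    using eH_le[OF x] eH_pos[OF x] \<gamma>_bounds d'_bounds n_pos \<Delta>_pos
    by (intro divide_left_mono mult_left_mono) auto
  finally show ?thesis unfolding slack_def .
qed

lemma colour_class_exponent_le:
  assumes x: "x \<in> pairs r" and pos: "0 < colour_class_size \<alpha> x"
  shows "\<gamma>^2 * d'^2 / (256 * (real \<Delta>)^2 * real \<Lambda>) * real n
      \<le> 2 * (slack x)^2 / real (colour_class_size \<alpha> x)"
proof -
  have "\<gamma>^2 * d'^2 / (256 * (real \<Delta>)^2 * real \<Lambda>) * real n
      = 2 * (\<gamma> * d' * real n / (16 * real \<Delta>))^2 / (2 * real \<Lambda> * real n)"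
    using n_pos \<Delta>_pos \<Lambda>_pos by (simp add: power2_eq_square field_simps)
  also have "\<dots> \<le> 2 * (slack x)^2 / (2 * real \<Lambda> * real n)"
    using slack_ge[OF x] \<gamma>_bounds d'_bounds \<Lambda>_pos n_pos
    by (intro divide_right_mono mult_left_mono power_mono) auto
  also have "\<dots> \<le> 2 * (slack x)^2 / real (colour_class_size \<alpha> x)"
    using pos colour_class_size_le[OF x, of \<alpha>] by (intro divide_left_mono) auto
  finally show ?thesis .
qed

lemma prob_colour_class_excess_le:
  assumes \<alpha>: "\<alpha> \<in> M.colours" and x: "x \<in> pairs r"
    and pos: "0 < colour_class_size \<alpha> x"
  shows "measure_pmf.prob M.\<Omega> (colour_class_excess \<alpha> x)
           \<le> exp (- (\<gamma>^2 * d'^2 / (256 * (real \<Delta>)^2 * real \<Lambda>)) * real n)"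
proof -
  have "\<alpha> \<in> c ` EG" using \<alpha> cross_edges_subset by (auto simp: M.colours_def)
  then have q: "pmf (pair_choice \<alpha>) x = pair_weight \<alpha> x" using pair_choice_props x
    by simp
  have "measure_pmf.prob M.\<Omega> (colour_class_excess \<alpha> x)
      = measure_pmf.prob (colour_dist \<alpha>) {S. real (colour_class_size \<alpha> x) * (p / pmf (pair_choice \<alpha>) x) + slack x
                                                \<le> real (card {e\<in>S. pair_of e = x})}"
    using prob_Pi_pmf_component[OF M.finite_colours \<alpha>, of "{}" colour_dist
        "{S. real (colour_class_size \<alpha> x) * (p / pmf (pair_choice \<alpha>) x) + slack x \<le> real (card {e\<in>S. pair_of e = x})}"]
    unfolding M.\<Omega>_def colour_class_excess_def by simp
  also have "\<dots> \<le> exp (- 2 * (slack x)^2 / real (colour_class_size \<alpha> x))"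
    unfolding colour_dist_def colour_class_size_def
  proof (rule class_thinning_tail)
    show "finite {e \<in> cross_edges. c e = \<alpha>}" using finite_cross_edges by simp
    show "0 \<le> p" using p_pos by simp
    show "0 < pmf (pair_choice \<alpha>) x" using q p_le_pair_weight[of \<alpha> x] p_pos by simp
    show "p \<le> pmf (pair_choice \<alpha>) x" using q p_le_pair_weight by simp
    show "{e \<in> {e \<in> cross_edges. c e = \<alpha>}. pair_of e = x} \<noteq> {}"
      using pos unfolding colour_class_size_def by (metis card.empty less_irrefl)
    show "0 \<le> slack x" unfolding slack_def using \<gamma>_bounds d'_bounds eH_pos[OF x] by simp
  qed
  also have "\<dots>
      \<le> exp (- (\<gamma>^2 * d'^2 / (256 * (real \<Delta>)^2 * real \<Lambda>)) * real n)"
    using colour_class_exponent_le[OF x pos] by simp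
  finally show ?thesis .
qed

lemma card_colour_pairs_le:
  "real (card (M.colours \<times> pairs r)) \<le> 4 * real r^4 * (real n)^2"
proof -
  have "real (card (M.colours \<times> pairs r)) = real (card M.colours) * real (card (pairs r))"
    by (simp add: card_cartesian_product)
  also have "\<dots> \<le> (2 * real r * real n)^2 * real r^2"
  proof (rule mult_mono)
    have "card M.colours \<le> card cross_edges" unfolding M.colours_def
      by (rule card_image_le[OF finite_cross_edges])
    also have "\<dots> \<le> card EG" by (rule card_mono[OF finite_EG cross_edges_subset])
    finally have "real (card M.colours) \<le> real (card EG)" by simp
    also have "\<dots> \<le> (real (card VG))^2" by (rule card_EG_le)
    also have "\<dots> \<le> (2 * real r * real n)^2" by (rule power_mono[OF card_VG_le]) simp
    finally show "real (card M.colours) \<le> (2 * real r * real n)^2" .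
  qed (use card_pairs_le in auto)
  finally show ?thesis by (simp add: power2_eq_square power4_eq_xxxx mult_ac)
qed

lemma prob_bad_colour_class: "measure_pmf.prob M.\<Omega> bad_colour_class \<le> 1/4"
proof -
  define I where
  "I = {(\<alpha>, x). \<alpha> \<in> M.colours \<and> x \<in> pairs r \<and> colour_class_size \<alpha> x > 0}"
  have I: "I \<subseteq> M.colours \<times> pairs r" unfolding I_def by auto
  then have "finite I" using M.finite_colours finite_pairs finite_subset by blast
  then have "measure_pmf.prob M.\<Omega> bad_colour_class
      \<le> real (card I) * exp (- (\<gamma>^2 * d'^2 / (256 * (real \<Delta>)^2 * real \<Lambda>)) * real n)"
    unfolding bad_colour_class_def I_def[symmetric]
    by (rule prob_UN_le_card_mult) (clarify, rule prob_colour_class_excess_le, auto simp: I_def)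
  also have "\<dots>
      \<le> 4 * real r^4 * (real n)^2 * exp (- (\<gamma>^2 * d'^2 / (256 * (real \<Delta>)^2 * real \<Lambda>)) * real n)"
    using card_mono[OF finite_cartesian_product[OF M.finite_colours finite_pairs] I] card_colour_pairs_le
    by (intro mult_right_mono) auto
  also have "\<dots> \<le> 1/4" by (rule n_large_colour)
  finally show ?thesis .
qed


definition codegree_deviation ::
  "nat \<Rightarrow> nat \<Rightarrow> ('c \<Rightarrow> 'b set set) \<Rightarrow> real" where
  "codegree_deviation i j \<omega>
      = (\<Sum>w\<in>V j. \<Sum>w'\<in>V j. ((\<Sum>u\<in>V i. adj (M.kept_edges \<omega>) u w * adj (M.kept_edges \<omega>) u w') - d'^2 * real (card (V i)))^2)"

definition codegree_excess ::
  "nat \<Rightarrow> nat \<Rightarrow> ('c \<Rightarrow> 'b set set) set" where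
  "codegree_excess i j
      = {\<omega>. \<delta> * (real (card (V i)))^2 * (real (card (V j)))^2 \<le> codegree_deviation i j \<omega>}"

definition bad_codegree :: "('c \<Rightarrow> 'b set set) set" where
  "bad_codegree = (\<Union>(i, j)\<in>{(i, j). i \<in> {1..r} \<and> j \<in> {1..r} \<and> i \<noteq> j}. codegree_excess i j)"

lemma expectation_codegree_deviation_le:
  assumes i: "i \<in> {1..r}" and j: "j \<in> {1..r}" and ij: "i \<noteq> j"
  shows "M.expect (codegree_deviation i j) \<le>
     4 * real \<Lambda> * real (card (V i)) * (real (card (V j)))^2 + 2 * real \<Lambda> * (real (card (V i)))^2 * real (card (V j))
     + 8 * \<epsilon> * (real (card (V i)))^2 * (real (card (V j)))^2"
proof -
  define Ni where "Ni = real (card (V i))"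
  define Nj where "Nj = real (card (V j))"
  have "M.expect (codegree_deviation i j) \<le>
     4 * real \<Lambda> * Ni * Nj^2 + 2 * real \<Lambda> * Ni^2 * Nj
     + 2 * (\<Sum>w\<in>V j. \<Sum>w'\<in>V j. (p^2 * (\<Sum>u\<in>V i. adj cross_edges u w * adj cross_edges u w') - d'^2 * Ni)^2)"
    unfolding codegree_deviation_def Ni_def Nj_def
    by (rule M.expectation_codegree_square_deviation_le[OF finite_V[OF i] finite_V[OF j]])
  also have "(\<Sum>w\<in>V j. \<Sum>w'\<in>V j. (p^2 * (\<Sum>u\<in>V i. adj cross_edges u w * adj cross_edges u w') - d'^2 * Ni)^2)
      \<le> (\<Sum>w\<in>V j. \<Sum>w'\<in>V j. ((\<Sum>u\<in>V i. adj EG u w * adj EG u w') - d^2 * Ni)^2)"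
  proof (intro sum_mono)
    fix w w' assume w: "w \<in> V j" and w': "w' \<in> V j"
    have eq: "(\<Sum>u\<in>V i. adj cross_edges u w * adj cross_edges u w')
        = (\<Sum>u\<in>V i. adj EG u w * adj EG u w')"
      by (intro sum.cong refl) (simp add: adj_cross_edges[OF i j ij _ w] adj_cross_edges[OF i j ij _ w'])
    have "p^2 * (\<Sum>u\<in>V i. adj cross_edges u w * adj cross_edges u w') - d'^2 * Ni
        = p^2 * ((\<Sum>u\<in>V i. adj EG u w * adj EG u w') - d^2 * Ni)"
    proof -
      have d2: "d'^2 = p^2 * d^2" using p_times_d by (metis power_mult_distrib)
      show ?thesis unfolding eq d2 by (simp add: right_diff_distrib mult.assoc)
    qed
    then have "(p^2 * (\<Sum>u\<in>V i. adj cross_edges u w * adj cross_edges u w') - d'^2 * Ni)^2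
        = p^4 * ((\<Sum>u\<in>V i. adj EG u w * adj EG u w') - d^2 * Ni)^2"
      by (simp add: power_mult_distrib flip: power_mult)
    also have "\<dots> \<le> 1 * ((\<Sum>u\<in>V i. adj EG u w * adj EG u w') - d^2 * Ni)^2"
      using p_pos p_le_1 by (intro mult_right_mono) (auto simp: power_le_one)
    finally show "(p^2 * (\<Sum>u\<in>V i. adj cross_edges u w * adj cross_edges u w') - d'^2 * Ni)^2
        \<le> ((\<Sum>u\<in>V i. adj EG u w * adj EG u w') - d^2 * Ni)^2" by simp
  qed
  also have "\<dots> \<le> 4 * \<epsilon> * Ni^2 * Nj^2"
    unfolding Ni_def Nj_def
    by (rule super_regular_codegree_deviation[OF super_regular_G[OF i j ij] finite_V[OF i] finite_V[OF j] V_disjoint[OF i j ij] \<epsilon>_bounds(1) _ d_bounds(2)]) (use \<epsilon>_bounds in simp)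
  finally show ?thesis unfolding Ni_def Nj_def by simp
qed

lemma codegree_deviation_nonneg: "0 \<le> codegree_deviation i j \<omega>"
  unfolding codegree_deviation_def by (intro sum_nonneg) auto

lemma prob_codegree_excess_le:
  assumes i: "i \<in> {1..r}" and j: "j \<in> {1..r}" and ij: "i \<noteq> j"
  shows "measure_pmf.prob M.\<Omega> (codegree_excess i j)
      \<le> (12 * real \<Lambda> / real n + 8 * \<epsilon>) / \<delta>"
proof -
  define Ni where "Ni = real (card (V i))"
  define Nj where "Nj = real (card (V j))"
  have Ni: "real n / 2 \<le> Ni" and Nj: "real n / 2 \<le> Nj"
    using card_V_ge[OF i] card_V_ge[OF j] by (auto simp: Ni_def Nj_def)
  have n: "real n > 0" using n_pos by simp
  have \<delta>: "\<delta> > 0" using \<epsilon>'_bounds by (simp add: \<delta>_def)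
  have pos: "\<delta> * Ni^2 * Nj^2 > 0" using \<delta> Ni Nj n by simp
  have "measure_pmf.prob M.\<Omega> (codegree_excess i j)
      = measure (measure_pmf M.\<Omega>) {\<omega> \<in> space (measure_pmf M.\<Omega>). \<delta> * Ni^2 * Nj^2 \<le> codegree_deviation i j \<omega>}"
    by (simp add: codegree_excess_def Ni_def Nj_def)
  also have "\<dots>
      \<le> M.expect (codegree_deviation i j) / (\<delta> * Ni^2 * Nj^2)"
    by (rule integral_Markov_inequality_measure[where A=UNIV])
       (auto simp: M.integrable_\<Omega> codegree_deviation_nonneg pos)
  also have "\<dots>
      \<le> (4 * real \<Lambda> * Ni * Nj^2 + 2 * real \<Lambda> * Ni^2 * Nj + 8 * \<epsilon> * Ni^2 * Nj^2) / (\<delta> * Ni^2 * Nj^2)"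
    using expectation_codegree_deviation_le[OF i j ij] pos unfolding Ni_def Nj_def
    by (intro divide_right_mono) auto
  also have "\<dots>
      = (4 * real \<Lambda> / Ni + 2 * real \<Lambda> / Nj + 8 * \<epsilon>) / \<delta>"
    using Ni Nj n \<delta> by (simp add: field_simps power2_eq_square)
  also have "\<dots> \<le> (12 * real \<Lambda> / real n + 8 * \<epsilon>) / \<delta>"
  proof (rule divide_right_mono)
    have "4 * real \<Lambda> / Ni \<le> 4 * real \<Lambda> / (real n / 2)" "2 * real \<Lambda> / Nj
        \<le> 2 * real \<Lambda> / (real n / 2)"
      using Ni Nj n by (intro divide_left_mono; simp)+
    then show "4 * real \<Lambda> / Ni + 2 * real \<Lambda> / Nj + 8 * \<epsilon>
        \<le> 12 * real \<Lambda> / real n + 8 * \<epsilon>"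
      using n by (simp add: field_simps)
  qed (use \<delta> in simp)
  finally show ?thesis .
qed

lemma codegree_union_bound_arith:
  "real r^2 * ((12 * real \<Lambda> / real n + 8 * \<epsilon>) / \<delta>) \<le> 1/4"
proof -
  have \<delta>: "\<delta> > 0" using \<epsilon>'_bounds by (simp add: \<delta>_def)
  have "real r^2 * (12 * real \<Lambda> / real n) \<le> \<delta> / 8"
    using n_large_codegree n_pos by (simp add: \<delta>_def divide_le_eq mult_ac)
  moreover have "\<epsilon> * (512 * real r^2) \<le> \<epsilon>'^12"
    using \<epsilon>_bounds(4) r_pos by (simp add: le_divide_eq)
  then have "real r^2 * (8 * \<epsilon>) \<le> \<delta> / 8" by (simp add: \<delta>_def mult_ac)
  ultimately have "real r^2 * ((12 * real \<Lambda> / real n + 8 * \<epsilon>) / \<delta>)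
      \<le> (\<delta> / 8 + \<delta> / 8) / \<delta>"
    using \<delta> by (simp add: distrib_left divide_right_mono flip: add_divide_distrib)
  also have "\<dots> = 1/4" using \<delta> by simp
  finally show ?thesis .
qed

lemma prob_bad_codegree: "measure_pmf.prob M.\<Omega> bad_codegree \<le> 1/4"
proof -
  define I where "I = {(i, j). i \<in> {1..r} \<and> j \<in> {1..r} \<and> i \<noteq> j}"
  have I: "I \<subseteq> {1..r} \<times> {1..r}" unfolding I_def by auto
  then have "finite I" using finite_subset by blast
  then have "measure_pmf.prob M.\<Omega> bad_codegree
      \<le> real (card I) * ((12 * real \<Lambda> / real n + 8 * \<epsilon>) / \<delta>)"
    unfolding bad_codegree_def I_def[symmetric]
    by (rule prob_UN_le_card_mult) (clarify, rule prob_codegree_excess_le, auto simp: I_def)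
  also have "\<dots> \<le> real r^2 * ((12 * real \<Lambda> / real n + 8 * \<epsilon>) / \<delta>)"
    using card_mono[OF _ I] \<epsilon>_bounds \<epsilon>'_bounds
    by (intro mult_right_mono) (auto simp: \<delta>_def power2_eq_square simp flip: of_nat_mult)
  also have "\<dots> \<le> 1/4" by (rule codegree_union_bound_arith)
  finally show ?thesis .
qed

lemma colour_class_eq:
  assumes x: "(i, j) \<in> pairs r"
  shows "{e\<in>{e\<in>cross_edges. c e = \<alpha>}. pair_of e = (i, j)}
      = {e\<in>edges_between EG (V i) (V j). c e = \<alpha>}"
proof
  show "{e\<in>{e\<in>cross_edges. c e = \<alpha>}. pair_of e = (i, j)}
      \<subseteq> {e\<in>edges_between EG (V i) (V j). c e = \<alpha>}"
    using pair_of_cross_edge by (force simp: pair_edges_def)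
  show "{e\<in>edges_between EG (V i) (V j). c e = \<alpha>}
      \<subseteq> {e\<in>{e\<in>cross_edges. c e = \<alpha>}. pair_of e = (i, j)}"
    using x pair_of_eq unfolding cross_edges_def by (force simp: pair_edges_def)
qed

lemma real_colour_class_size_eq:
  assumes "x \<in> pairs r"
  shows "real (colour_class_size \<alpha> x) = ecol \<alpha> x"
proof (cases x)
  case (Pair i j)
  then show ?thesis
    using colour_class_eq[of i j \<alpha>] assms unfolding colour_class_size_def ecol_def e_col_def
    by simp
qed

lemma colour_class_mean_le:
  assumes \<alpha>: "\<alpha> \<in> c ` EG" and x: "x \<in> pairs r"
    and pos: "0 < colour_class_size \<alpha> x"
  shows "real (colour_class_size \<alpha> x) * (p / pmf (pair_choice \<alpha>) x)
      \<le> (1 - 3 * \<gamma> / 4) * d' * real n^2 / eH x"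
proof -
  define D where "D = (1 - 3 * \<gamma> / 4) * d * real n ^ 2"
  define m where "m = real (colour_class_size \<alpha> x)"
  have D: "D > 0" using weight_denominator_pos by (simp add: D_def)
  have m: "m > 0" using pos by (simp add: m_def)
  have q: "pmf (pair_choice \<alpha>) x = m * eH x / D + p"
    using pair_choice_props[OF \<alpha>] x real_colour_class_size_eq[OF x]
      unfolding pair_weight_def D_def m_def by simp
  have q_pos: "0 < m * eH x / D" using m eH_pos[OF x] D by simp
  have "0 < pmf (pair_choice \<alpha>) x" using q q_pos p_pos by simp
  then have "p / pmf (pair_choice \<alpha>) x \<le> p / (m * eH x / D)"
    using q p_pos mult_pos_pos[OF _ q_pos] by (intro divide_left_mono) simp_all
  then have "m * (p / pmf (pair_choice \<alpha>) x) \<le> m * (p / (m * eH x / D))"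
    using m by (intro mult_left_mono) auto
  also have "\<dots> = p * D / eH x" using m eH_pos[OF x] D by (simp add: field_simps)
  also have "p * D = (1 - 3 * \<gamma> / 4) * d' * real n^2" unfolding D_def using p_times_d
    by (simp add: mult_ac)
  finally show ?thesis unfolding m_def .
qed

lemma expected_degree_close:
  assumes i: "i \<in> {1..r}" and j: "j \<in> {1..r}" and ij: "i \<noteq> j" and v: "v \<in> V i"
  shows "\<bar>p * (\<Sum>w\<in>V j. adj EG v w) - d' * real (card (V j))\<bar> \<le> \<theta> / 2 * real (card (V j))"
proof -
  have "p * (\<Sum>w\<in>V j. adj EG v w) - d' * real (card (V j))
      = p * ((\<Sum>w\<in>V j. adj EG v w) - d * real (card (V j)))"
    using p_times_d by (simp add: right_diff_distrib mult.assoc[symmetric])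
  then have "\<bar>p * (\<Sum>w\<in>V j. adj EG v w) - d' * real (card (V j))\<bar>
      = p * \<bar>(\<Sum>w\<in>V j. adj EG v w) - d * real (card (V j))\<bar>"
    using p_pos by (simp add: abs_mult)
  also have "\<dots> \<le> 1 * (\<epsilon> * real (card (V j)))"
    using super_regular_deg_left[OF super_regular_G[OF i j ij] finite_V[OF j] v] p_le_1 p_pos
    by (intro mult_mono) auto
  also have "\<dots> \<le> \<theta> / 2 * real (card (V j))"
    using mult_right_mono[OF eps_le_half_theta, of "real (card (V j))"] by simp
  finally show ?thesis .
qed

lemma exists_good_outcome:
  "\<exists>\<omega>\<in>set_pmf M.\<Omega>. \<omega> \<notin> bad_degree
    \<and> \<omega> \<notin> bad_colour_class \<and> \<omega> \<notin> bad_codegree"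
proof -
  define U where "U = bad_degree \<union> bad_colour_class \<union> bad_codegree"
  have "measure_pmf.prob M.\<Omega> U
      \<le> measure_pmf.prob M.\<Omega> (bad_degree \<union> bad_colour_class) + measure_pmf.prob M.\<Omega> bad_codegree"
    unfolding U_def by (rule measure_Un_le) auto
  also have "measure_pmf.prob M.\<Omega> (bad_degree \<union> bad_colour_class)
      \<le> measure_pmf.prob M.\<Omega> bad_degree + measure_pmf.prob M.\<Omega> bad_colour_class"
    by (rule measure_Un_le) auto
  finally have "measure_pmf.prob M.\<Omega> U \<le> 3/4"
    using prob_bad_degree prob_bad_colour_class prob_bad_codegree by linarith
  moreover have "measure_pmf.prob M.\<Omega> (UNIV - U) = 1 - measure_pmf.prob M.\<Omega> U"
    using measure_pmf.prob_compl[of U "M.\<Omega>"] by simp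
  ultimately have "measure_pmf.prob M.\<Omega> (UNIV - U) \<noteq> 0" by linarith
  then have "set_pmf M.\<Omega> \<inter> (UNIV - U) \<noteq> {}" using measure_pmf_zero_iff by blast
  then show ?thesis unfolding U_def by blast
qed

context
  fixes \<omega> assumes \<omega>: "\<omega> \<in> set_pmf M.\<Omega>"
    and good_degree: "\<omega> \<notin> bad_degree"
      and good_colour_class: "\<omega> \<notin> bad_colour_class"
    and good_codegree: "\<omega> \<notin> bad_codegree"
begin

definition "EG' = M.kept_edges \<omega>"

lemma EG'_subset_cross_edges: "EG' \<subseteq> cross_edges" unfolding EG'_def M.kept_edges_def
  by auto
lemma EG'_subset: "EG' \<subseteq> EG" using EG'_subset_cross_edges cross_edges_subset by blast

lemma deg_EG'_close:
  assumes j: "j \<in> {1..r}" and v: "v \<in> VG" "v \<notin> V j"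
  shows "\<bar>(\<Sum>w\<in>V j. adj EG' v w) - d' * real (card (V j))\<bar> \<le> \<theta> * real (card (V j))"
proof -
  obtain i where i: "i \<in> {1..r}" and vi: "v \<in> V i" using v VG_eq by blast
  have ij: "i \<noteq> j" using vi v by auto
  have "(v, j) \<in> {(v, j). j \<in> {1..r} \<and> v \<in> VG - V j}" using j v by simp
  then have "\<omega> \<notin> degree_deviation v j" using good_degree unfolding bad_degree_def by blast
  then have kept_close: "\<bar>(\<Sum>e\<in>nbr_edges v j. M.kept e \<omega>) - p * real (card (nbr_edges v j))\<bar>
      < \<theta> * real (card (V j)) / 2"
    unfolding degree_deviation_def by simp
  have EG'_sum: "(\<Sum>w\<in>V j. adj EG' v w) = (\<Sum>e\<in>nbr_edges v j. M.kept e \<omega>)"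
    unfolding EG'_def by (rule nbr_edges_sums(1)[OF j])
  have nbr_card: "real (card (nbr_edges v j)) = (\<Sum>w\<in>V j. adj EG v w)"
    unfolding nbr_edges_sums(2)[OF j] by (intro sum.cong refl adj_cross_edges[OF i j ij vi])
  show ?thesis
    using kept_close expected_degree_close[OF i j ij vi]
    unfolding EG'_sum nbr_card abs_le_iff abs_less_iff by linarith
qed

lemma super_regular_EG':
  assumes i: "i \<in> {1..r}" and j: "j \<in> {1..r}" and ij: "i \<noteq> j"
  shows "super_regular (edges_between EG' (V i) (V j)) (V i) (V j) \<epsilon>' d'"
proof (rule super_regular_of_degrees_codegrees[where \<theta>=\<theta> and \<delta>=\<delta>])
  show "finite (V i)" "finite (V j)" using finite_V i j by auto
  show "V i \<inter> V j = {}" by (rule V_disjoint[OF i j ij])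
  show "V i \<noteq> {}" "V j \<noteq> {}" using V_nonempty i j by auto
  show "0 \<le> d'" using d'_bounds by simp
  show "d' \<le> 1" by (rule d'_le_1)
  show "0 < \<epsilon>'" by (rule \<epsilon>'_bounds(1))
  show "\<theta> \<le> \<epsilon>'" using theta_le \<epsilon>'_bounds by simp
  show "3 * \<delta> + 6 * \<theta>^2 \<le> \<epsilon>'^12"
    by (simp add: \<delta>_def \<theta>_def power2_eq_square power_add[symmetric])
  show "\<forall>v\<in>V i. \<bar>(\<Sum>w\<in>V j. adj EG' v w) - d' * real (card (V j))\<bar>
      \<le> \<theta> * real (card (V j))"
  proof
    fix v assume v: "v \<in> V i"
    have "v \<notin> V j" using v V_disjoint[OF i j ij] by auto
    then show "\<bar>(\<Sum>w\<in>V j. adj EG' v w) - d' * real (card (V j))\<bar>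
        \<le> \<theta> * real (card (V j))"
      using deg_EG'_close[OF j] v V_subset_VG[OF i] by auto
  qed
  show "\<forall>w\<in>V j. \<bar>(\<Sum>u\<in>V i. adj EG' u w) - d' * real (card (V i))\<bar>
      \<le> \<theta> * real (card (V i))"
  proof
    fix w assume w: "w \<in> V j"
    have "w \<notin> V i" using w V_disjoint[OF i j ij] by auto
    then have "\<bar>(\<Sum>u\<in>V i. adj EG' w u) - d' * real (card (V i))\<bar>
        \<le> \<theta> * real (card (V i))"
      using deg_EG'_close[OF i] w V_subset_VG[OF j] by auto
    then show "\<bar>(\<Sum>u\<in>V i. adj EG' u w) - d' * real (card (V i))\<bar>
        \<le> \<theta> * real (card (V i))"
      by (simp add: adj_commute[of _ w])
  qed
  have "codegree_deviation i j \<omega> < \<delta> * (real (card (V i)))^2 * (real (card (V j)))^2"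
  proof -
    have mem: "(i, j) \<in> {(i, j). i \<in> {1..r} \<and> j \<in> {1..r} \<and> i \<noteq> j}"
      using i j ij by simp
    have "\<omega> \<notin> {\<omega>. codegree_deviation i j \<omega> \<ge> \<delta> * (real (card (V i)))^2 * (real (card (V j)))^2}"
      using good_codegree mem unfolding bad_codegree_def codegree_excess_def by blast
    then show ?thesis by simp
  qed
  then show "(\<Sum>w\<in>V j. \<Sum>w'\<in>V j. ((\<Sum>u\<in>V i. adj EG' u w * adj EG' u w') - d'^2 * real (card (V i)))^2)
      \<le> \<delta> * (real (card (V i)))^2 * (real (card (V j)))^2"
    unfolding codegree_deviation_def EG'_def by simp
qed
lemma blowup_instance_EG': "blowup_instance VH EH VG EG' r X V \<epsilon>' d'"
  unfolding blowup_instance_def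
proof (intro conjI)
  show "simple_graph VG EG'" using simple_G EG'_subset unfolding simple_graph_def by blast
  show "\<forall>i\<in>{1..r}. \<forall>j\<in>{1..r}. i \<noteq> j
      \<longrightarrow> super_regular (edges_between EG' (V i) (V j)) (V i) (V j) \<epsilon>' d'"
    using super_regular_EG' by blast
qed (use blowup in \<open>auto simp: blowup_instance_def\<close>)

lemma outcome_in_support:
  "\<alpha> \<in> M.colours \<Longrightarrow> \<omega> \<alpha>
    \<in> set_pmf (colour_dist \<alpha>)"
proof -
  assume a: "\<alpha> \<in> M.colours"
  have "\<omega> \<in> PiE_dflt M.colours {} (set_pmf \<circ> colour_dist)" using \<omega>
    unfolding M.\<Omega>_def set_Pi_pmf[OF M.finite_colours] .
  then show ?thesis using a unfolding PiE_dflt_def by auto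
qed

lemma pair_of_eq_if_same_colour:
  "e \<in> EG' \<Longrightarrow> f \<in> EG' \<Longrightarrow> c e
    = c f \<Longrightarrow> pair_of e = pair_of f"
proof -
  assume e: "e \<in> EG'" and f: "f \<in> EG'" and cef: "c e = c f"
  have eX: "e \<in> cross_edges" and ew: "e \<in> \<omega> (c e)" using e
    unfolding EG'_def M.kept_edges_def by auto
  have fw: "f \<in> \<omega> (c e)" using f cef unfolding EG'_def M.kept_edges_def by auto
  have "c e \<in> M.colours" using eX by (simp add: M.colours_def)
  then have "\<omega> (c e) \<in> set_pmf (colour_dist (c e))" by (rule outcome_in_support)
  then show "pair_of e = pair_of f" using class_thinning_support(2)[of "\<omega> (c e)"] ew fw
    unfolding colour_dist_def by blast
qed

lemma colour_split_EG': "colour_split c EG' r V"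
  unfolding colour_split_def
proof (intro ballI impI)
  fix i j e f assume i: "i \<in> {1..r}" and j: "j \<in> {1..r}" and ij: "i \<noteq> j"
    and e: "e \<in> edges_between EG' (V i) (V j)"
      and f: "f \<in> EG' - edges_between EG' (V i) (V j)"
  define x where "x = (min i j, max i j)"
  have x: "x \<in> pairs r" using i j ij by (auto simp: x_def pairs_def min_def max_def)
  have class_eq: "pair_edges x = edges_between EG (V i) (V j)"
  proof (cases "i < j")
    case True
    then show ?thesis by (simp add: x_def pair_edges_def)
  next
    case False
    then have "min i j = j" "max i j = i" using ij by auto
    then show ?thesis by (simp add: x_def pair_edges_def edges_between_commute)
  qed
  show "c e \<noteq> c f"
  proof
    assume same: "c e = c f"
    have eG: "e \<in> EG'" and fG: "f \<in> EG'" using e f unfolding edges_between_def by auto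
    have "e \<in> pair_edges x" using e EG'_subset class_eq unfolding edges_between_def by auto
    then have "pair_of f = x"
      using pair_of_eq[OF x] pair_of_eq_if_same_colour[OF eG fG same] by simp
    moreover have "f \<in> cross_edges" using fG EG'_subset_cross_edges by auto
    ultimately have "f \<in> pair_edges x" using pair_of_cross_edge by metis
    then show False using f fG EG'_subset class_eq unfolding edges_between_def by auto
  qed
qed

lemma e_betw_EG'_ge:
  assumes i: "i \<in> {1..r}" and j: "j \<in> {1..r}" and ij: "i \<noteq> j"
  shows "real (e_betw EG' (V i) (V j))
      \<ge> (d' - \<theta>) * real (card (V i)) * real (card (V j))"
proof -
  have "real (e_betw EG' (V i) (V j)) = (\<Sum>u\<in>V i. \<Sum>w\<in>V j. adj EG' u w)"
    by (rule e_betw_eq_sum_adj[OF V_disjoint[OF i j ij] finite_V[OF i] finite_V[OF j]])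
  also have "\<dots> \<ge> (\<Sum>u\<in>V i. (d' - \<theta>) * real (card (V j)))"
  proof (intro sum_mono)
    fix u assume u: "u \<in> V i"
    have "u \<notin> V j" using u V_disjoint[OF i j ij] by auto
    then have "\<bar>(\<Sum>w\<in>V j. adj EG' u w) - d' * real (card (V j))\<bar>
        \<le> \<theta> * real (card (V j))"
      using deg_EG'_close[OF j] u V_subset_VG[OF i] by auto
    then show "(d' - \<theta>) * real (card (V j)) \<le> (\<Sum>w\<in>V j. adj EG' u w)"
      by (simp add: abs_le_iff left_diff_distrib)
  qed
  finally show ?thesis by (simp add: mult_ac)
qed

lemma e_betw_EG'_lower:
  assumes x: "(i, j) \<in> pairs r"
  shows "(1 - 5 * \<gamma> / 8) * d' * real n^2 / eH (i, j)
           \<le> (1 - \<gamma>/2) * real (e_betw EG' (V i) (V j)) / real (e_betw EH (X i) (X j))"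
proof -
  have i: "i \<in> {1..r}" and j: "j \<in> {1..r}" and ij: "i \<noteq> j" using pairs_memD[OF x]
    by auto
  have "(d' - \<theta>) * ((1 - \<epsilon>) * real n) * ((1 - \<epsilon>) * real n)
      \<le> (d' - \<theta>) * real (card (V i)) * real (card (V j))"
    using card_V_bounds[OF i] card_V_bounds[OF j] theta_le_d' eps_le_half by (intro mult_mono) auto
  also have "\<dots> \<le> real (e_betw EG' (V i) (V j))" by (rule e_betw_EG'_ge[OF i j ij])
  finally have "(1 - \<gamma> / 2) * ((d' - \<theta>) * ((1 - \<epsilon>) * real n) * ((1 - \<epsilon>) * real n))
      \<le> (1 - \<gamma> / 2) * real (e_betw EG' (V i) (V j))"
    using \<gamma>_bounds by (intro mult_left_mono) auto
  then have "(1 - 5 * \<gamma> / 8) * d' * real n^2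
      \<le> (1 - \<gamma> / 2) * real (e_betw EG' (V i) (V j))"
    using edge_count_arith by linarith
  then show ?thesis using eH_pos[OF x] unfolding eH_def by (auto intro: divide_right_mono)
qed

lemma colour_class_EG'_subset:
  assumes "(i, j) \<in> pairs r"
  shows "{e\<in>edges_between EG' (V i) (V j). c e = \<alpha>}
      \<subseteq> {e\<in>\<omega> \<alpha>. pair_of e = (i, j)}"
proof
  fix e assume e: "e \<in> {e\<in>edges_between EG' (V i) (V j). c e = \<alpha>}"
  then have "e \<in> pair_edges (i, j)" using EG'_subset unfolding pair_edges_def edges_between_def
    by auto
  then show "e \<in> {e\<in>\<omega> \<alpha>. pair_of e = (i, j)}"
    using e pair_of_eq[OF assms] unfolding EG'_def M.kept_edges_def edges_between_def by auto
qed

lemma finite_outcome_colour: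
  assumes "\<alpha> \<in> M.colours"
  shows "finite (\<omega> \<alpha>)"
proof -
  have "\<omega> \<alpha> \<subseteq> {e\<in>cross_edges. c e = \<alpha>}"
    using outcome_in_support[OF assms] unfolding colour_dist_def by (rule class_thinning_support(1))
  then show ?thesis using finite_cross_edges finite_subset by fastforce
qed

lemma k_bounded_EG':
  assumes x: "(i, j) \<in> pairs r"
  shows "k_bounded c (edges_between EG' (V i) (V j))
           ((1 - \<gamma>/2) * real (e_betw EG' (V i) (V j)) / real (e_betw EH (X i) (X j)))"
  unfolding k_bounded_def
proof
  fix \<alpha>
  define K where "K = {e\<in>edges_between EG' (V i) (V j). c e = \<alpha>}"
  show "real (card K)
      \<le> (1 - \<gamma>/2) * real (e_betw EG' (V i) (V j)) / real (e_betw EH (X i) (X j))"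
  proof (cases "K = {}")
    case True
    then show ?thesis using \<gamma>_bounds by simp
  next
    case False
    then obtain e0 where e0: "e0 \<in> K" by blast
    then have "e0 \<in> cross_edges" using EG'_subset_cross_edges unfolding K_def edges_between_def
      by auto
    then have \<alpha>: "\<alpha> \<in> M.colours" and \<alpha>G: "\<alpha> \<in> c ` EG"
      using e0 cross_edges_subset unfolding K_def M.colours_def by auto
    have "e0 \<in> {e\<in>edges_between EG (V i) (V j). c e = \<alpha>}"
      using e0 EG'_subset unfolding K_def edges_between_def by auto
    then have pos: "0 < colour_class_size \<alpha> (i, j)"
      unfolding colour_class_size_def colour_class_eq[OF x] using finite_EG
      by (auto simp: card_gt_0_iff edges_between_def)
    have "\<omega> \<notin> colour_class_excess \<alpha> (i, j)"
      using good_colour_class \<alpha> x pos unfolding bad_colour_class_def by blast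
    then have "real (card {e\<in>\<omega> \<alpha>. pair_of e = (i, j)})
        < real (colour_class_size \<alpha> (i, j)) * (p / pmf (pair_choice \<alpha>) (i, j)) + slack (i, j)"
      unfolding colour_class_excess_def by simp
    moreover have "real (card K) \<le> real (card {e\<in>\<omega> \<alpha>. pair_of e = (i, j)})"
      using card_mono[OF _ colour_class_EG'_subset[OF x]] finite_outcome_colour[OF \<alpha>]
        unfolding K_def by simp
    moreover have "(1 - 3 * \<gamma> / 4) * d' * real n^2 / eH (i, j) + slack (i, j)
        = (1 - 5 * \<gamma> / 8) * d' * real n^2 / eH (i, j)"
      unfolding slack_def using eH_pos[OF x] by (simp add: field_simps)
    ultimately show ?thesis
      using colour_class_mean_le[OF \<alpha>G x pos] e_betw_EG'_lower[OF x] by linarith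
  qed
qed

end

theorem sparsification_exists:
  "\<exists>EG'. EG' \<subseteq> EG \<and> blowup_instance VH EH VG EG' r X V \<epsilon>' d' \<and> colour_split c EG' r V \<and>
     (\<forall>(i,j)\<in>pairs r. k_bounded c (edges_between EG' (V i) (V j))
        ((1 - \<gamma>/2) * real (e_betw EG' (V i) (V j)) / real (e_betw EH (X i) (X j))))"
proof -
  obtain \<omega> where good: "\<omega> \<in> set_pmf M.\<Omega>" "\<omega> \<notin> bad_degree" "\<omega> \<notin> bad_colour_class"
    "\<omega> \<notin> bad_codegree"
    using exists_good_outcome by blast
  show ?thesis
    using EG'_subset[OF good] blowup_instance_EG'[OF good] colour_split_EG'[OF good] k_bounded_EG'[OF good]
    by (intro exI[of _ "EG' \<omega>"]) auto
qed

end

lemma eventually_exp_decay_le: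
  fixes a K :: real and k :: nat
  assumes "0 < a"
  shows "\<forall>\<^sub>F n in sequentially. K * real n ^ k * exp (- a * real n) \<le> 1/4"
proof -
  have "((\<lambda>n::nat. K * real n ^ k * exp (- a * real n)) \<longlongrightarrow> 0) sequentially"
    using assms by real_asymp
  then have "\<forall>\<^sub>F n in sequentially. K * real n ^ k * exp (- a * real n) < 1/4"
    by (rule order_tendstoD) simp
  then show ?thesis by eventually_elim (rule less_imp_le)
qed

lemma eventually_sparsification_size:
  fixes \<gamma> d' \<epsilon>' :: real and r \<Lambda> \<Delta> :: nat
  assumes "0 < \<gamma>" "0 < d'" "0 < \<epsilon>'" "1 \<le> \<Lambda>" "1 \<le> \<Delta>"
  shows "\<forall>\<^sub>F n in sequentially. 1 \<le> n \<and>
    4 * real r^2 * real n * exp (- (\<epsilon>'^12 / (64 * real \<Lambda>)) * real n) \<le> 1/4 \<and>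
    4 * real r^4 * (real n)^2 * exp (- (\<gamma>^2 * d'^2 / (256 * (real \<Delta>)^2 * real \<Lambda>)) * real n) \<le> 1/4 \<and>
    96 * real \<Lambda> * real r^2 \<le> real n * (\<epsilon>'^12 / 8)"
proof (intro eventually_conj)
  show "\<forall>\<^sub>F n in sequentially. 1 \<le> n" by (rule eventually_ge_at_top)
  show "\<forall>\<^sub>F n in sequentially. 4 * real r^2 * real n * exp (- (\<epsilon>'^12 / (64 * real \<Lambda>)) * real n) \<le> 1/4"
    using eventually_exp_decay_le[of "\<epsilon>'^12 / (64 * real \<Lambda>)" "4 * real r^2" 1] assms by simp
  show "\<forall>\<^sub>F n in sequentially.
      4 * real r^4 * (real n)^2 * exp (- (\<gamma>^2 * d'^2 / (256 * (real \<Delta>)^2 * real \<Lambda>)) * real n) \<le> 1/4"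
    by (rule eventually_exp_decay_le) (use assms in simp)
  have "filterlim (\<lambda>n::nat. real n * (\<epsilon>'^12 / 8)) at_top sequentially"
    using assms by real_asymp
  from this[unfolded filterlim_at_top, rule_format, of "96 * real \<Lambda> * real r^2"]
  show "\<forall>\<^sub>F n in sequentially. 96 * real \<Lambda> * real r^2 \<le> real n * (\<epsilon>'^12 / 8)" .
qed

theorem lemma5p2:
  "\<forall>(d::real) (\<Lambda>::nat) (r::nat) (\<Delta>::nat). 0 < d \<and> d \<le> 1 \<and> 1 \<le> \<Lambda> \<and> 1 \<le> r \<and> 1 \<le> \<Delta> \<longrightarrow>
   (\<exists>\<gamma>0>0. \<forall>\<gamma>. 0 < \<gamma> \<and> \<gamma> \<le> \<gamma>0 \<longrightarrow>
   (\<exists>d'0>0. \<forall>d'. 0 < d' \<and> d' \<le> d'0 \<longrightarrow>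
   (\<exists>\<epsilon>'0>0. \<forall>\<epsilon>'. 0 < \<epsilon>' \<and> \<epsilon>' \<le> \<epsilon>'0 \<longrightarrow>
   (\<exists>\<epsilon>0>0. \<forall>\<epsilon>. 0 < \<epsilon> \<and> \<epsilon> \<le> \<epsilon>0 \<longrightarrow>
   (\<exists>n0::nat. \<forall>n\<ge>n0.
     \<forall>(VH::'a set) EH (VG::'b set) EG (X::nat \<Rightarrow> 'a set) (V::nat \<Rightarrow> 'b set)
       (c::'b set \<Rightarrow> 'c) (C::'c set).
       blowup_instance VH EH VG EG r X V \<epsilon> d \<and>
       max_degree_le VH EH \<Delta> \<and>
       (\<forall>(i,j)\<in>pairs r. real (e_betw EH (X i) (X j)) \<ge> \<gamma>^2 * real n) \<and>
       (\<forall>i\<in>{1..r}. \<bar>real (card (V i)) - real n\<bar> \<le> \<epsilon> * real n) \<and>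
       (\<forall>e\<in>EG. c e \<in> C) \<and> locally_bounded c EG \<Lambda> \<and>
       (\<forall>\<alpha>\<in>C. (\<Sum>(i,j)\<in>pairs r.
            real (e_col c \<alpha> EG (V i) (V j)) * real (e_betw EH (X i) (X j)))
          \<le> (1 - \<gamma>) * d * real n ^ 2)
       \<longrightarrow>
       (\<exists>EG'. EG' \<subseteq> EG \<and>
          blowup_instance VH EH VG EG' r X V \<epsilon>' d' \<and>
          colour_split c EG' r V \<and>
          (\<forall>(i,j)\<in>pairs r.
             k_bounded c (edges_between EG' (V i) (V j))
               ((1 - \<gamma>/2) * real (e_betw EG' (V i) (V j)) / real (e_betw EH (X i) (X j))))))))))"
proof (intro allI impI, goal_cases)
  case params: (1 d \<Lambda> r \<Delta>)
  then have \<Lambda>: "1 \<le> \<Lambda>" and \<Delta>: "1 \<le> \<Delta>" by auto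
  show ?case
  proof (rule exI[of _ "1/2"], intro conjI allI impI, simp, goal_cases)
    case \<gamma>: (1 \<gamma>)
    show ?case
    proof (rule exI[of _ "d * \<gamma> / (16 * real r^2)"], intro conjI allI impI, use params \<gamma> in simp,
        goal_cases)
      case d': (1 d')
      show ?case
      proof (rule exI[of _ "\<gamma> * d' / 16"], intro conjI allI impI, use \<gamma> d' in simp, goal_cases)
        case \<epsilon>': (1 \<epsilon>')
        show ?case
        proof (rule exI[of _ "min (min (d / 2) (\<epsilon>'^6 / 8)) (min (\<epsilon>'^12 / (512 * real r^2)) (\<gamma> / 64))"],
            intro conjI allI impI, use params \<gamma> \<epsilon>' in simp, goal_cases)
          case \<epsilon>: (1 \<epsilon>)
          from eventually_sparsification_size[OF conjunct1[OF \<gamma>] conjunct1[OF d'] conjunct1[OF \<epsilon>'] \<Lambda> \<Delta>, of r]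
          show ?case unfolding eventually_sequentially[symmetric]
          proof eventually_elim
            case (elim n)
            show ?case
            proof (intro allI impI, goal_cases)
              case (1 VH EH VG EG X V c C)
              interpret sparsification VH EH VG EG r X V c n d \<gamma> d' \<epsilon>' \<epsilon> \<Lambda> \<Delta>
                by unfold_locales (use 1 elim params \<gamma> d' \<epsilon>' \<epsilon> in auto)
              show ?case by (rule sparsification_exists)
            qed
          qed
        qed
      qed
    qed
  qed
qed

end
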